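(* Suppose $K^0\in\mathbb{K}$. For any step size $0<\eta\le\frac12$, the iterates of the Gauss–Newton method $$K^{n+1}_i=K^n_i-2\eta\big(R_i+B_i^T\mathcal{E}_i(P^{K^n})B_i\big)^{-1}L_i^{K^n},\quad i\in\Omega,$$ all lie in $\mathbb{K}$ and satisfy, for all $n\ge0$, $$C(K^n)-C(K^* )\le\Big(1-\frac{2\mu}{\|\mathbf{X}^{K^*}\|_{\max}}\eta\Big)^n\big(C(K^0)-C(K^* )\big).$$
   Context: Let $N_s\ge 1$, $\Omega=\{1,\dots,N_s\}$; tuples $V=(V_1,\dots,V_{N_s})$ of matrices are combined componentwise, $\|V\|_{\max}=\max_i\|V_i\|$ (spectral norm). Markovian jump linear system: $x_{t+1}=A_{\omega(t)}x_t+B_{\omega(t)}u_t$, $A_i\in\mathbb{R}^{d\times d}$, $B_i\in\mathbb{R}^{d\times k}$; $\{\omega(t)\}$ is a time-homogeneous Markov chain on $\Omega$ with transition probabilities $p_{ij}$ and initial distribution $\pi$ with $\pi_i>0$; $x_0$ is random, independent of the chain, with $\mathbb{E}[x_0x_0^T]\succ0$. The system is mean-square stabilizable. $Q=(Q_i)\succ0$, $R=(R_i)\succ0$. For $K=(K_i)$, $K_i\in\mathbb{R}^{k\times d}$, $u_t=-K_{\omega(t)}x_t$ and $C(K)=\mathbb{E}[\sum_{t\ge0}x_t^TQ_{\omega(t)}x_t+u_t^TR_{\omega(t)}u_t]$. $\mathbb{K}$ is the set of $K$ making the closed loop $x_{t+1}=\Gamma_{\omega(t)}x_t$, $\Gamma_i=A_i-B_iK_i$,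 mean-square stable (equivalently $C(K)<\infty$). $K^*$ is the optimal gain minimizing $C$ over $\mathbb{K}$. $\mathcal{E}_i(V)=\sum_jp_{ij}V_j$; $\mathcal{T}_j(V)=\sum_ip_{ij}\Gamma_iV_i\Gamma_i^T$. For $K\in\mathbb{K}$: $P^K$ solves $P_i^K=Q_i+K_i^TR_iK_i+\Gamma_i^T\mathcal{E}_i(P^K)\Gamma_i$; $L_i^K=(R_i+B_i^T\mathcal{E}_i(P^K)B_i)K_i-B_i^T\mathcal{E}_i(P^K)A_i$; $X_i(0)=\mathbb{E}[x_0x_0^T\mathbf{1}\{\omega(0)=i\}]$, $\mathbf{X}^K=\sum_{t\ge0}\mathcal{T}^t(X(0))$. $\mu=\min_i\pi_i\,\sigma_{\min}(\mathbb{E}[x_0x_0^T])$. *)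

theory Defs
  imports "HOL-Analysis.Analysis"
begin

(* Conventions:
   's :: finite  -- the mode set Omega = {1..N_s}
   'n :: finite  -- state index (x_t in R^d, d = CARD('n))
   'm :: finite  -- input index (u_t in R^k, k = CARD('m))
   A :: 's => real^'n^'n,  B :: 's => real^'m^'n,  K :: 's => real^'n^'m,
   Q :: 's => real^'n^'n,  R :: 's => real^'m^'m,
   p :: 's => 's => real   (p i j = transition probability i -> j),
   pi0 :: 's => real       (initial distribution),
   S0 :: real^'n^'n        (S0 = E[x0 x0^T]). *)

definition pos_def_mat :: "real^'n^'n \<Rightarrow> bool" where
  "pos_def_mat M \<longleftrightarrow> transpose M = M \<and> (\<forall>x. x \<noteq> 0 \<longrightarrow> x \<bullet> (M *v x) > 0)"

definition pos_semidef_mat :: "real^'n^'n \<Rightarrow> bool" where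
  "pos_semidef_mat M \<longleftrightarrow> transpose M = M \<and> (\<forall>x. x \<bullet> (M *v x) \<ge> 0)"

definition stochastic_matrix :: "('s::finite \<Rightarrow> 's \<Rightarrow> real) \<Rightarrow> bool" where
  "stochastic_matrix p \<longleftrightarrow> (\<forall>i j. p i j \<ge> 0) \<and> (\<forall>i. (\<Sum>j\<in>UNIV. p i j) = 1)"

definition prob_vector :: "('s::finite \<Rightarrow> real) \<Rightarrow> bool" where
  "prob_vector q \<longleftrightarrow> (\<forall>i. q i \<ge> 0) \<and> (\<Sum>i\<in>UNIV. q i) = 1"

definition closed_loop ::
  "('s \<Rightarrow> real^'n^'n) \<Rightarrow> ('s \<Rightarrow> real^'m^'n) \<Rightarrow> ('s \<Rightarrow> real^'n^'m) \<Rightarrow> 's \<Rightarrow> real^'n^'n" where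
  "closed_loop A B K i = A i - B i ** K i"

(* state transition matrix along a mode path: x_t = Phi w t x_0,
   Phi w t = Gamma_{w(t-1)} ... Gamma_{w(0)} *)
primrec trans_mat :: "('s \<Rightarrow> real^'n^'n) \<Rightarrow> (nat \<Rightarrow> 's) \<Rightarrow> nat \<Rightarrow> real^'n^'n" where
  "trans_mat G w 0 = mat 1"
| "trans_mat G w (Suc t) = G (w t) ** trans_mat G w t"

definition path_prob :: "('s \<Rightarrow> real) \<Rightarrow> ('s \<Rightarrow> 's \<Rightarrow> real) \<Rightarrow> (nat \<Rightarrow> 's) \<Rightarrow> nat \<Rightarrow> real" where
  "path_prob q p w t = q (w 0) * (\<Prod>s<t. p (w s) (w (Suc s)))"

(* E[ x_t^T M_{omega(t)} x_t ] for the closed loop x_{t+1} = G_{omega(t)} x_t, where omega is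
   the Markov chain with initial distribution q and transition matrix p, x_0 is independent
   of the chain with E[x_0 x_0^T] = S.  The expectation over the chain is the finite sum over
   all mode paths of length t+1; given the path, E[x_t^T M x_t] = tr(Phi^T M Phi S). *)
definition quad_expect ::
  "('s::finite \<Rightarrow> real) \<Rightarrow> ('s \<Rightarrow> 's \<Rightarrow> real) \<Rightarrow> real^'n^'n \<Rightarrow> ('s \<Rightarrow> real^'n^'n)
    \<Rightarrow> ('s \<Rightarrow> real^'n^'n) \<Rightarrow> nat \<Rightarrow> real" where
  "quad_expect q p S G M t =
     (\<Sum>w \<in> PiE {..t} (\<lambda>_. UNIV).
        path_prob q p w t * trace (transpose (trans_mat G w t) ** M (w t) ** trans_mat G w t ** S))"

definition mean_square_stable ::
  "('s::finite \<Rightarrow> 's \<Rightarrow> real) \<Rightarrow> ('s \<Rightarrow> real^'n^'n) \<Rightarrow> bool" where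
  "mean_square_stable p G \<longleftrightarrow>
     (\<forall>q S. prob_vector q \<longrightarrow> pos_semidef_mat S \<longrightarrow>
        (\<lambda>t. quad_expect q p S G (\<lambda>_. mat 1) t) \<longlonglongrightarrow> 0)"

definition stabilizing ::
  "('s::finite \<Rightarrow> 's \<Rightarrow> real) \<Rightarrow> ('s \<Rightarrow> real^'n^'n) \<Rightarrow> ('s \<Rightarrow> real^'m^'n) \<Rightarrow> ('s \<Rightarrow> real^'n^'m) set" where
  "stabilizing p A B = {K. mean_square_stable p (closed_loop A B K)}"

(* the cost C(K) = E[ sum_t x_t^T Q x_t + u_t^T R u_t ], u_t = -K x_t
   (meaningful, i.e. a convergent series, for K in \<bbbK>) *)
definition lqr_cost ::
  "('s::finite \<Rightarrow> real) \<Rightarrow> ('s \<Rightarrow> 's \<Rightarrow> real) \<Rightarrow> real^'n^'n \<Rightarrow>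
   ('s \<Rightarrow> real^'n^'n) \<Rightarrow> ('s \<Rightarrow> real^'m^'n) \<Rightarrow> ('s \<Rightarrow> real^'n^'n) \<Rightarrow> ('s \<Rightarrow> real^'m^'m) \<Rightarrow>
   ('s \<Rightarrow> real^'n^'m) \<Rightarrow> real" where
  "lqr_cost q p S A B Q R K =
     (\<Sum>t. quad_expect q p S (closed_loop A B K) (\<lambda>i. Q i + transpose (K i) ** R i ** K i) t)"

definition mode_expect :: "('s::finite \<Rightarrow> 's \<Rightarrow> real) \<Rightarrow> ('s \<Rightarrow> real^'n^'n) \<Rightarrow> 's \<Rightarrow> real^'n^'n" where
  "mode_expect p V i = (\<Sum>j\<in>UNIV. p i j *\<^sub>R V j)"

definition T_op :: "('s::finite \<Rightarrow> 's \<Rightarrow> real) \<Rightarrow> ('s \<Rightarrow> real^'n^'n) \<Rightarrow> ('s \<Rightarrow> real^'n^'n) \<Rightarrow> 's \<Rightarrow> real^'n^'n" where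
  "T_op p G V j = (\<Sum>i\<in>UNIV. p i j *\<^sub>R (G i ** V i ** transpose (G i)))"

definition P_mat ::
  "('s::finite \<Rightarrow> 's \<Rightarrow> real) \<Rightarrow> ('s \<Rightarrow> real^'n^'n) \<Rightarrow> ('s \<Rightarrow> real^'m^'n) \<Rightarrow> ('s \<Rightarrow> real^'n^'n)
    \<Rightarrow> ('s \<Rightarrow> real^'m^'m) \<Rightarrow> ('s \<Rightarrow> real^'n^'m) \<Rightarrow> 's \<Rightarrow> real^'n^'n" where
  "P_mat p A B Q R K = (THE P. \<forall>i. P i = Q i + transpose (K i) ** R i ** K i
      + transpose (closed_loop A B K i) ** mode_expect p P i ** closed_loop A B K i)"

definition L_mat ::
  "('s::finite \<Rightarrow> 's \<Rightarrow> real) \<Rightarrow> ('s \<Rightarrow> real^'n^'n) \<Rightarrow> ('s \<Rightarrow> real^'m^'n) \<Rightarrow> ('s \<Rightarrow> real^'n^'n)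
    \<Rightarrow> ('s \<Rightarrow> real^'m^'m) \<Rightarrow> ('s \<Rightarrow> real^'n^'m) \<Rightarrow> 's \<Rightarrow> real^'n^'m" where
  "L_mat p A B Q R K i =
     (R i + transpose (B i) ** mode_expect p (P_mat p A B Q R K) i ** B i) ** K i
     - transpose (B i) ** mode_expect p (P_mat p A B Q R K) i ** A i"

(* X_i(0) = E[x0 x0^T 1{omega(0)=i}] = pi_i E[x0 x0^T]  (x0 independent of the chain) *)
definition X0 :: "('s \<Rightarrow> real) \<Rightarrow> real^'n^'n \<Rightarrow> 's \<Rightarrow> real^'n^'n" where
  "X0 q S i = q i *\<^sub>R S"

definition X_bold ::
  "('s::finite \<Rightarrow> real) \<Rightarrow> ('s \<Rightarrow> 's \<Rightarrow> real) \<Rightarrow> real^'n^'n \<Rightarrow>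
   ('s \<Rightarrow> real^'n^'n) \<Rightarrow> ('s \<Rightarrow> real^'m^'n) \<Rightarrow> ('s \<Rightarrow> real^'n^'m) \<Rightarrow> 's \<Rightarrow> real^'n^'n" where
  "X_bold q p S A B K i = (\<Sum>t. ((T_op p (closed_loop A B K) ^^ t) (X0 q S)) i)"

definition spec_norm :: "real^'a^'b \<Rightarrow> real" where
  "spec_norm M = onorm (\<lambda>x. M *v x)"

definition max_norm :: "('s::finite \<Rightarrow> real^'a^'b) \<Rightarrow> real" where
  "max_norm V = Max (range (\<lambda>i. spec_norm (V i)))"

definition sigma_min :: "real^'n^'n \<Rightarrow> real" where
  "sigma_min M = Inf {norm (M *v x) | x. norm x = 1}"

definition mu_const :: "('s::finite \<Rightarrow> real) \<Rightarrow> real^'n^'n \<Rightarrow> real" where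
  "mu_const q S = Min (range q) * sigma_min S"

definition gn_step ::
  "('s::finite \<Rightarrow> 's \<Rightarrow> real) \<Rightarrow> ('s \<Rightarrow> real^'n^'n) \<Rightarrow> ('s \<Rightarrow> real^'m^'n) \<Rightarrow> ('s \<Rightarrow> real^'n^'n)
    \<Rightarrow> ('s \<Rightarrow> real^'m^'m) \<Rightarrow> real \<Rightarrow> ('s \<Rightarrow> real^'n^'m) \<Rightarrow> 's \<Rightarrow> real^'n^'m" where
  "gn_step p A B Q R \<eta> K i =
     K i - (2 * \<eta>) *\<^sub>R (matrix_inv (R i + transpose (B i) ** mode_expect p (P_mat p A B Q R K) i ** B i)
                         ** L_mat p A B Q R K i)"

end

theory Submission
  imports Defs
begin

(* For a stabilizing gain K the cost is a pairing in two ways,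
     C(K) = <P^K, X(0)> = <Q + K^T R K, X^K>,   <V, W> = sum_i tr (V_i W_i),
   because P^K = sum_t Lambda^t (Q + K^T R K) and X^K = sum_t T^t X(0) for the mutually
   adjoint operators Lambda(V)_i = Gamma_i^T E_i(V) Gamma_i and T; mean-square stability is
   exponential, so both series converge.  Comparing two gains K, K' through these identities,
     C(K') - C(K) = <(K'-K)^T L^K + (L^K)^T (K'-K) + (K'-K)^T H (K'-K), X^{K'}>
   with H_i = R_i + B_i^T E_i(P^K) B_i.  For the Gauss-Newton step K' - K = -2 eta H^-1 L^K the
   bracket equals (4 eta^2 - 4 eta) N, N_i = (L^K_i)^T H_i^-1 L^K_i.  Hence P^K is a Lyapunov
   function for the new closed loop, so K' is stabilizing, and since X^{K'} >= X(0) >= mu I the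
   cost drops by at least 2 eta mu tr N.  Completing the square shows that the bracket is >= -N
   for every K', so C(K) - C(Kopt) <= ||X^{Kopt}||_max tr N.  Together the two bounds give the
   contraction factor 1 - 2 mu eta / ||X^{Kopt}||_max. *)

section \<open>Matrix identities\<close>

lemma matrix_add_rdistrib: "((A::real^'n^'m) + B) ** C = A ** C + B ** C"
  by (vector matrix_matrix_mult_def sum.distrib distrib_right)

lemma matrix_diff_ldistrib: "(A::real^'n^'m) ** (B - C) = A ** B - A ** C"
  by (vector matrix_matrix_mult_def sum_subtractf right_diff_distrib)

lemma matrix_diff_rdistrib: "((A::real^'n^'m) - B) ** C = A ** C - B ** C"
  by (vector matrix_matrix_mult_def sum_subtractf left_diff_distrib)

lemma matrix_neg_left: "(- (A::real^'n^'m)) ** B = - (A ** B)"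
  by (simp add: matrix_matrix_mult_def vec_eq_iff sum_negf)

lemma matrix_neg_right: "(A::real^'n^'m) ** (- B) = - (A ** B)"
  by (simp add: matrix_matrix_mult_def vec_eq_iff sum_negf)

lemma matrix_sum_ldistrib: "(A::real^'n^'m) ** (\<Sum>i\<in>I. f i) = (\<Sum>i\<in>I. A ** f i)"
  by (induction I rule: infinite_finite_induct) (auto simp: matrix_add_ldistrib)

lemma matrix_sum_rdistrib: "(\<Sum>i\<in>I. f i) ** (A::real^'n^'m) = (\<Sum>i\<in>I. f i ** A)"
  by (induction I rule: infinite_finite_induct) (auto simp: matrix_add_rdistrib)

lemma matrix_vector_mult_sum: "(\<Sum>i\<in>I. f i) *v (x::real^'n) = (\<Sum>i\<in>I. (f i :: real^'n^'m) *v x)"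
  by (induction I rule: infinite_finite_induct) (simp_all add: matrix_vector_mult_add_rdistrib)

lemma scaleR_matrix_vector_mult: "(c *\<^sub>R (A::real^'n^'m)) *v x = c *\<^sub>R (A *v x)"
  by (vector matrix_vector_mult_def sum_distrib_left mult.assoc)

lemma transpose_add: "transpose ((A::real^'n^'m) + B) = transpose A + transpose B"
  by (vector transpose_def)

lemma transpose_diff: "transpose ((A::real^'n^'m) - B) = transpose A - transpose B"
  by (vector transpose_def)

lemma transpose_neg: "transpose (- (A::real^'n^'m)) = - transpose A"
  by (vector transpose_def)

lemma trace_zero [simp]: "trace (0::real^'n^'n) = 0"
  by (simp add: trace_def)

lemma trace_sum: "trace (\<Sum>i\<in>I. (f i :: real^'n^'n)) = (\<Sum>i\<in>I. trace (f i))"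
  by (induction I rule: infinite_finite_induct) (auto simp: trace_add)

lemma trace_scaleR: "trace (c *\<^sub>R (A::real^'n^'n)) = c * trace A"
  by (simp add: trace_def sum_distrib_left)

lemma trace_mult_scaleR: "trace ((A::real^'n^'n) ** (c *\<^sub>R B)) = c * trace (A ** B)"
  by (simp add: matrix_scalar_ac scalar_matrix_assoc[symmetric] trace_scaleR)

lemma trace_mult_cycle: "trace ((A::real^'n^'n) ** M ** B) = trace (M ** (B ** A))"
proof -
  have "trace (A ** M ** B) = trace (A ** (M ** B))" by (simp add: matrix_mul_assoc)
  also have "\<dots> = trace ((M ** B) ** A)" by (rule trace_mul_sym)
  finally show ?thesis by (simp add: matrix_mul_assoc)
qed

lemma trace_mult_weighted_sum:
  "trace ((A::real^'n^'n) ** (\<Sum>i\<in>I. c i *\<^sub>R M i) ** B) = (\<Sum>i\<in>I. c i * trace (A ** M i ** B))"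
  by (simp add: trace_mult_cycle matrix_sum_rdistrib trace_sum scalar_matrix_assoc[symmetric] trace_scaleR)

lemma inner_transpose: "x \<bullet> (transpose M *v y) = (M *v x) \<bullet> (y::real^'m)"
  by (metis dot_lmul_matrix inner_commute transpose_matrix_vector)

lemma inner_transpose_mult: "x \<bullet> ((transpose (M::real^'c^'r) ** N) *v y) = (M *v x) \<bullet> (N *v y)"
  unfolding matrix_vector_mul_assoc[symmetric] by (rule inner_transpose)

lemma inner_axis_matrix: "axis a (1::real) \<bullet> ((M::real^'n^'m) *v axis b 1) = M$a$b"
  by (simp add: inner_axis' matrix_vector_mul_component inner_axis)

lemma abs_trace_mult_le: "\<bar>trace ((M::real^'n^'n) ** N)\<bar> \<le> (\<Sum>k\<in>UNIV. \<Sum>l\<in>UNIV. \<bar>M$k$l\<bar> * \<bar>N$l$k\<bar>)"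
  unfolding trace_def matrix_matrix_mult_def
  by (auto intro!: order_trans[OF sum_abs] sum_mono simp: abs_mult)

lemma trace_mult_unit: "trace ((\<chi> k l. if k = b \<and> l = a then 1 else 0) ** (W::real^'n^'n)) = W$a$b"
proof -
  have row: "(\<Sum>k\<in>UNIV. if i = b \<and> k = a then c else 0) = (if i = b then c else (0::real))" for i c
    by (cases "i = b") simp_all
  have "trace ((\<chi> k l. if k = b \<and> l = a then 1 else 0) ** W)
      = (\<Sum>i\<in>UNIV. \<Sum>k\<in>UNIV. if i = b \<and> k = a then W$a$b else 0)"
    by (simp add: trace_def matrix_matrix_mult_def if_distrib if_distribR cong: if_cong)
  also have "\<dots> = W$a$b"
    by (simp only: row) simp
  finally show ?thesis .
qed

section \<open>Quadratic forms and semidefinite matrices\<close>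

definition quad_form :: "real^'n^'n \<Rightarrow> real^'n \<Rightarrow> real" where
  "quad_form M x = x \<bullet> (M *v x)"

lemma quad_form_add: "quad_form (M + N) x = quad_form M x + quad_form N x"
  by (simp add: quad_form_def matrix_vector_mult_add_rdistrib inner_add_right)

lemma quad_form_diff: "quad_form (M - N) x = quad_form M x - quad_form N x"
  by (simp add: quad_form_def matrix_vector_mult_diff_rdistrib inner_diff_right)

lemma quad_form_scaleR: "quad_form (c *\<^sub>R M) x = c * quad_form M x"
  by (simp add: quad_form_def scaleR_matrix_vector_mult)

lemma quad_form_sum: "quad_form (\<Sum>i\<in>I. f i) x = (\<Sum>i\<in>I. quad_form (f i) x)"
  by (induction I rule: infinite_finite_induct) (simp_all add: quad_form_add quad_form_def[of 0])

lemma quad_form_mat_1: "quad_form (mat 1) x = norm x ^ 2"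
  by (simp add: quad_form_def power2_norm_eq_inner)

lemma quad_form_congruence: "quad_form (transpose G ** M ** G) x = quad_form M (G *v x)"
proof -
  have "x \<bullet> ((transpose G ** M ** G) *v x) = x \<bullet> ((transpose G ** (M ** G)) *v x)"
    by (simp only: matrix_mul_assoc)
  also have "\<dots> = (G *v x) \<bullet> ((M ** G) *v x)" by (rule inner_transpose_mult)
  also have "\<dots> = (G *v x) \<bullet> (M *v (G *v x))" by (simp only: matrix_vector_mul_assoc)
  finally show ?thesis by (simp only: quad_form_def)
qed

lemma quad_form_add_vector:
  "quad_form M (x + y) = quad_form M x + x \<bullet> (M *v y) + y \<bullet> (M *v x) + quad_form M y"
  by (simp add: quad_form_def matrix_vector_right_distrib inner_add_left inner_add_right)

lemma quad_form_scaleR_vector: "quad_form M (c *\<^sub>R x) = c\<^sup>2 * quad_form M x"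
  by (simp add: quad_form_def matrix_vector_mult_scaleR power2_eq_square)

lemma inner_symmetric_matrix: "transpose M = M \<Longrightarrow> x \<bullet> (M *v y) = y \<bullet> ((M::real^'n^'n) *v x)"
  by (metis inner_transpose inner_commute)

lemma pos_semidef_mat_iff: "pos_semidef_mat M \<longleftrightarrow> transpose M = M \<and> (\<forall>x. 0 \<le> quad_form M x)"
  by (simp add: pos_semidef_mat_def quad_form_def)

lemma pos_def_mat_iff: "pos_def_mat M \<longleftrightarrow> transpose M = M \<and> (\<forall>x. x \<noteq> 0 \<longrightarrow> 0 < quad_form M x)"
  by (simp add: pos_def_mat_def quad_form_def)

lemma pos_def_imp_pos_semidef: "pos_def_mat M \<Longrightarrow> pos_semidef_mat M"
  unfolding pos_def_mat_iff pos_semidef_mat_iff by (metis order_less_imp_le order_refl quad_form_def inner_zero_left)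

lemma pos_semidef_mat_1: "pos_semidef_mat (mat 1)"
  by (simp add: pos_semidef_mat_iff quad_form_mat_1)

lemma pos_semidef_add: "pos_semidef_mat M \<Longrightarrow> pos_semidef_mat N \<Longrightarrow> pos_semidef_mat (M + N)"
  by (simp add: pos_semidef_mat_iff transpose_add quad_form_add)

lemma pos_def_add_pos_semidef: "pos_def_mat M \<Longrightarrow> pos_semidef_mat N \<Longrightarrow> pos_def_mat (M + N)"
  by (simp add: pos_def_mat_iff pos_semidef_mat_iff transpose_add quad_form_add add_pos_nonneg)

lemma pos_semidef_scaleR: "0 \<le> c \<Longrightarrow> pos_semidef_mat M \<Longrightarrow> pos_semidef_mat (c *\<^sub>R M)"
  by (simp add: pos_semidef_mat_iff transpose_scalar quad_form_scaleR)

lemma pos_semidef_congruence: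
  "pos_semidef_mat M \<Longrightarrow> pos_semidef_mat (transpose G ** M ** G)"
  by (simp add: pos_semidef_mat_iff quad_form_congruence matrix_transpose_mul matrix_mul_assoc)

lemma pos_semidef_congruence_transpose:
  "pos_semidef_mat M \<Longrightarrow> pos_semidef_mat (G ** M ** transpose G)"
  using pos_semidef_congruence[of M "transpose G"] by simp

lemma pos_semidef_zero: "pos_semidef_mat 0"
  by (simp add: pos_semidef_mat_iff quad_form_def transpose_def vec_eq_iff)

lemma pos_semidef_sum: "(\<And>i. i \<in> I \<Longrightarrow> pos_semidef_mat (f i)) \<Longrightarrow> pos_semidef_mat (\<Sum>i\<in>I. f i)"
  by (induction I rule: infinite_finite_induct) (simp_all add: pos_semidef_add pos_semidef_zero)

lemma pos_semidef_kernel: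
  assumes psd: "pos_semidef_mat A" and zero: "quad_form A x = 0"
  shows "A *v x = 0"
proof -
  have sym: "transpose A = A" and nonneg: "\<And>z. 0 \<le> quad_form A z"
    using psd by (auto simp: pos_semidef_mat_iff)
  have "y \<bullet> (A *v x) = 0" for y
  proof (rule ccontr)
    define b where "b = y \<bullet> (A *v x)"
    define d where "d = quad_form A y + 1"
    define t where "t = - b / d"
    assume "y \<bullet> (A *v x) \<noteq> 0"
    then have "b \<noteq> 0" by (simp add: b_def)
    have d_pos: "d > 0" using nonneg[of y] by (simp add: d_def)
    \<comment> \<open>along the line through \<open>x\<close> in direction \<open>y\<close> the form is a quadratic in \<open>t\<close>
      vanishing at \<open>t = 0\<close> with slope \<open>2 b \<noteq> 0\<close>, so it takes negative values\<close>
    have "quad_form A (x + t *\<^sub>R y) = 2 * t * b + t\<^sup>2 * (d - 1)"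
      using inner_symmetric_matrix[OF sym, of x y] zero
      by (simp add: quad_form_add_vector quad_form_scaleR_vector matrix_vector_mult_scaleR b_def d_def)
    also have "\<dots> = - b\<^sup>2 * (d + 1) / d\<^sup>2"
      using d_pos by (simp add: t_def field_simps power2_eq_square)
    also have "\<dots> < 0"
      using \<open>b \<noteq> 0\<close> d_pos by (simp add: divide_neg_pos)
    finally show False using nonneg by (metis not_le)
  qed
  from this[of "A *v x"] show ?thesis by simp
qed

definition rank_one :: "real^'n \<Rightarrow> real^'n^'n" where
  "rank_one v = (\<chi> i j. v$i * v$j)"

lemma rank_one_mult_vector: "rank_one v *v x = (v \<bullet> x) *\<^sub>R v"
  by (vector rank_one_def matrix_vector_mult_def inner_vec_def sum_distrib_left mult.commute mult.left_commute)

lemma quad_form_rank_one: "quad_form (rank_one v) x = (v \<bullet> x)\<^sup>2"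
  by (simp add: quad_form_def rank_one_mult_vector power2_eq_square inner_commute)

lemma transpose_rank_one: "transpose (rank_one v) = rank_one v"
  by (vector rank_one_def transpose_def mult.commute)

lemma trace_mult_rank_one: "trace (Y ** rank_one v) = quad_form Y v"
  by (simp add: trace_def quad_form_def rank_one_def matrix_matrix_mult_def matrix_vector_mult_def
      inner_vec_def sum_distrib_left sum_distrib_right mult_ac)

lemma rank_one_scaleR: "rank_one (r *\<^sub>R v) = r\<^sup>2 *\<^sub>R rank_one v"
  by (vector rank_one_def power2_eq_square)

lemma quad_form_rank_one_update:
  fixes N :: "real^'n^'n"
  assumes sym: "transpose N = N" and a: "quad_form N e \<noteq> 0"
  shows "quad_form (N - (1 / quad_form N e) *\<^sub>R rank_one (N *v e)) x
    = quad_form N (x - ((N *v e) \<bullet> x / quad_form N e) *\<^sub>R e)"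
proof -
  define a where "a = quad_form N e"
  define r where "r = - ((N *v e) \<bullet> x) / a"
  have Nex: "x \<bullet> (N *v e) = (N *v e) \<bullet> x" "e \<bullet> (N *v x) = (N *v e) \<bullet> x"
    using inner_symmetric_matrix[OF sym, of x e] by (simp_all add: inner_commute)
  have "quad_form N (x + r *\<^sub>R e)
      = quad_form N x + r * (x \<bullet> (N *v e)) + r * (e \<bullet> (N *v x)) + r\<^sup>2 * quad_form N e"
    by (simp add: quad_form_add_vector quad_form_scaleR_vector matrix_vector_mult_scaleR)
  also have "\<dots> = quad_form N x - ((N *v e) \<bullet> x)\<^sup>2 / a"
    using a by (simp add: Nex a_def[symmetric] r_def field_simps power2_eq_square)
  finally have "quad_form N (x - ((N *v e) \<bullet> x / a) *\<^sub>R e) = quad_form N x - ((N *v e) \<bullet> x)\<^sup>2 / a"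
    by (simp add: r_def)
  then show ?thesis
    by (simp add: a_def quad_form_diff quad_form_scaleR quad_form_rank_one)
qed

lemma pos_semidef_deflate:
  fixes N :: "real^'n^'n"
  assumes psd: "pos_semidef_mat N" and j: "N$j \<noteq> 0"
  defines "a \<equiv> N$j$j"
  defines "N' \<equiv> N - (1/a) *\<^sub>R rank_one (N$j)"
  shows "0 < a" "pos_semidef_mat N'" "{i. N'$i \<noteq> 0} \<subseteq> {i. N$i \<noteq> 0} - {j}"
proof -
  have sym: "transpose N = N" and nonneg: "\<And>x. 0 \<le> quad_form N x"
    using psd by (auto simp: pos_semidef_mat_iff)
  have N_sym: "N$i$k = N$k$i" for i k
    using sym by (metis transpose_def vec_lambda_beta)
  define e :: "real^'n" where "e = axis j 1"
  have Ne: "N *v e = N$j"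
    by (simp add: e_def vec_eq_iff matrix_vector_mult_def axis_def N_sym
        if_distrib if_distribR cong: if_cong)
  have a_eq: "a = quad_form N e"
    unfolding quad_form_def Ne by (simp add: a_def e_def inner_axis')
  show a_pos: "0 < a"
  proof -
    have "a \<noteq> 0"
    proof
      assume "a = 0"
      then have "N *v e = 0" using pos_semidef_kernel[OF psd] a_eq by simp
      then show False using Ne j by simp
    qed
    then show ?thesis using nonneg a_eq by (simp add: order_le_neq_trans)
  qed
  have "quad_form N' x = quad_form N (x - ((N$j \<bullet> x) / a) *\<^sub>R e)" for x
    using quad_form_rank_one_update[OF sym, of e x] a_pos by (simp add: N'_def a_eq Ne)
  then show "pos_semidef_mat N'"
    using nonneg sym
    by (simp add: pos_semidef_mat_iff N'_def transpose_diff transpose_scalar transpose_rank_one)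
  show "{i. N'$i \<noteq> 0} \<subseteq> {i. N$i \<noteq> 0} - {j}"
  proof
    fix i assume i: "i \<in> {i. N'$i \<noteq> 0}"
    have row: "N'$i = N$i - ((1/a) * N$j$i) *\<^sub>R N$j"
      by (simp add: N'_def rank_one_def vec_eq_iff)
    have "N'$j = 0"
      using a_pos by (simp add: N'_def rank_one_def vec_eq_iff a_def)
    moreover have "N$i = 0 \<Longrightarrow> N$j$i = 0"
      using N_sym by simp
    ultimately show "i \<in> {i. N$i \<noteq> 0} - {j}"
      using i row by auto
  qed
qed

lemma pos_semidef_sum_rank_one:
  assumes "pos_semidef_mat N"
  shows "\<exists>vs. N = (\<Sum>v\<leftarrow>vs. rank_one v)"
  using assms
proof (induction "card {j. N$j \<noteq> 0}" arbitrary: N rule: less_induct)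
  case less
  show ?case
  proof (cases "\<exists>j. N$j \<noteq> 0")
    case False
    then have "N = 0" by (simp add: vec_eq_iff)
    then show ?thesis by (intro exI[of _ "[]"]) simp
  next
    case True
    then obtain j where j: "N$j \<noteq> 0" by blast
    define a where "a = N$j$j"
    define N' where "N' = N - (1/a) *\<^sub>R rank_one (N$j)"
    note deflate = pos_semidef_deflate[OF less.prems j, folded a_def, folded N'_def]
    have "card {i. N'$i \<noteq> 0} \<le> card ({i. N$i \<noteq> 0} - {j})"
      by (rule card_mono[OF _ deflate(3)]) simp
    also have "\<dots> < card {i. N$i \<noteq> 0}"
      using j by (intro card_Diff1_less) auto
    finally obtain vs where vs: "N' = (\<Sum>v\<leftarrow>vs. rank_one v)"
      using less.hyps deflate(2) by blast
    define v where "v = (1 / sqrt a) *\<^sub>R N$j"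
    have "rank_one v = (1/a) *\<^sub>R rank_one (N$j)"
      using deflate(1) by (simp add: v_def rank_one_scaleR power_divide)
    then have "N = (\<Sum>v\<leftarrow>v # vs. rank_one v)"
      using vs by (simp add: N'_def algebra_simps)
    then show ?thesis by blast
  qed
qed

lemma trace_mult_sum_rank_one: "trace (Y ** (\<Sum>v\<leftarrow>vs. rank_one v)) = (\<Sum>v\<leftarrow>vs. quad_form Y v)"
  by (induction vs) (auto simp: matrix_add_ldistrib trace_add trace_mult_rank_one)

lemma trace_mult_ge:
  assumes "pos_semidef_mat N" "\<And>x. c * norm x ^ 2 \<le> quad_form Y x"
  shows "c * trace N \<le> trace (Y ** N)"
proof -
  obtain vs where N: "N = (\<Sum>v\<leftarrow>vs. rank_one v)" using pos_semidef_sum_rank_one assms(1) by blast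
  have "c * (\<Sum>v\<leftarrow>vs. quad_form (mat 1) v) \<le> (\<Sum>v\<leftarrow>vs. quad_form Y v)"
    by (induction vs) (auto simp: distrib_left quad_form_mat_1 intro: add_mono assms(2))
  then show ?thesis using trace_mult_sum_rank_one[of "mat 1" vs] by (simp add: N trace_mult_sum_rank_one)
qed

lemma trace_mult_le:
  assumes "pos_semidef_mat N" "\<And>x. quad_form Y x \<le> c * norm x ^ 2"
  shows "trace (Y ** N) \<le> c * trace N"
proof -
  obtain vs where N: "N = (\<Sum>v\<leftarrow>vs. rank_one v)" using pos_semidef_sum_rank_one assms(1) by blast
  have "(\<Sum>v\<leftarrow>vs. quad_form Y v) \<le> c * (\<Sum>v\<leftarrow>vs. quad_form (mat 1) v)"
    by (induction vs) (auto simp: distrib_left quad_form_mat_1 intro: add_mono assms(2))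
  then show ?thesis using trace_mult_sum_rank_one[of "mat 1" vs] by (simp add: N trace_mult_sum_rank_one)
qed

lemma trace_mult_nonneg:
  "pos_semidef_mat N \<Longrightarrow> (\<And>x. 0 \<le> quad_form Y x) \<Longrightarrow> 0 \<le> trace (Y ** N)"
  using trace_mult_ge[of N 0 Y] by simp

lemma pos_semidef_trace_nonneg: "pos_semidef_mat N \<Longrightarrow> 0 \<le> trace N"
  using trace_mult_nonneg[of N "mat 1"] by (simp add: quad_form_mat_1)

lemma quad_form_le_trace:
  assumes "pos_semidef_mat N"
  shows "quad_form N x \<le> trace N * norm x ^ 2"
proof -
  have "quad_form N x = trace (N ** rank_one x)" by (simp add: trace_mult_rank_one)
  also have "\<dots> = trace (rank_one x ** N)" by (rule trace_mul_sym)
  also have "\<dots> \<le> norm x ^ 2 * trace N"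
  proof (rule trace_mult_le[OF assms])
    fix y
    have "\<bar>x \<bullet> y\<bar> \<le> norm x * norm y" by (rule Cauchy_Schwarz_ineq2)
    then have "\<bar>x \<bullet> y\<bar>\<^sup>2 \<le> (norm x * norm y)\<^sup>2" by (intro power_mono) auto
    then show "quad_form (rank_one x) y \<le> norm x ^ 2 * norm y ^ 2"
      by (simp add: quad_form_rank_one power_mult_distrib)
  qed
  finally show ?thesis by (simp add: mult.commute)
qed

lemma quad_form_le_trace_bound:
  assumes "pos_semidef_mat N" "trace N \<le> c"
  shows "quad_form N x \<le> c * norm x ^ 2"
  using quad_form_le_trace[OF assms(1), of x] mult_right_mono[OF assms(2), of "norm x ^ 2"] by simp

lemma quad_form_attains_min:
  fixes M :: "real^'n^'n"
  shows "\<exists>l. (\<forall>x. l * norm x ^ 2 \<le> quad_form M x) \<and> (\<exists>x0. norm x0 = 1 \<and> quad_form M x0 = l)"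
proof -
  have cont: "continuous_on (sphere 0 1) (quad_form M)"
    unfolding quad_form_def by (intro continuous_intros)
  have "sphere (0::real^'n) 1 \<noteq> {}"
    using norm_axis_1[of undefined] by (metis dist_0_norm empty_iff mem_sphere)
  then obtain x0 where x0: "norm x0 = 1" and min: "\<And>y. norm y = 1 \<Longrightarrow> quad_form M x0 \<le> quad_form M y"
    using continuous_attains_inf[OF compact_sphere _ cont] by auto
  have "quad_form M x0 * norm x ^ 2 \<le> quad_form M x" for x
  proof (cases "x = 0")
    case True then show ?thesis by (simp add: quad_form_def)
  next
    case False
    define u where "u = (1 / norm x) *\<^sub>R x"
    have "x = norm x *\<^sub>R u" using False by (simp add: u_def)
    then have "quad_form M x = norm x ^ 2 * quad_form M u" by (metis quad_form_scaleR_vector)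
    moreover have "quad_form M x0 \<le> quad_form M u" using False by (intro min) (simp add: u_def)
    ultimately show ?thesis by (simp add: mult.commute mult_right_mono)
  qed
  then show ?thesis using x0 by blast
qed

lemma pos_def_mat_coercive:
  assumes "pos_def_mat M"
  shows "\<exists>l>0. \<forall>x. l * norm x ^ 2 \<le> quad_form M x"
proof -
  obtain l x0 where "\<forall>x. l * norm x ^ 2 \<le> quad_form M x" "norm x0 = 1" "quad_form M x0 = l"
    using quad_form_attains_min by blast
  moreover from this have "x0 \<noteq> 0" by auto
  ultimately show ?thesis using assms by (auto simp: pos_def_mat_iff)
qed

lemma sigma_min_nonneg: "0 \<le> sigma_min (S::real^'n^'n)"
  unfolding sigma_min_def by (rule cInf_greatest) (use norm_axis_1[of undefined] in blast, auto)

lemma sigma_min_le_quad_form: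
  fixes S :: "real^'n^'n"
  assumes psd: "pos_semidef_mat S"
  shows "sigma_min S * norm x ^ 2 \<le> quad_form S x"
proof -
  obtain l x0 where l: "\<forall>x. l * norm x ^ 2 \<le> quad_form S x" and x0: "norm x0 = 1" "quad_form S x0 = l"
    using quad_form_attains_min by blast
  \<comment> \<open>the minimiser is an eigenvector: \<open>S - l I\<close> is semidefinite and vanishes on it\<close>
  have "pos_semidef_mat (S - l *\<^sub>R mat 1)"
    using psd l by (simp add: pos_semidef_mat_iff transpose_diff transpose_scalar quad_form_diff
        quad_form_scaleR quad_form_mat_1)
  moreover have "quad_form (S - l *\<^sub>R mat 1) x0 = 0"
    using x0 by (simp add: quad_form_diff quad_form_scaleR quad_form_mat_1)
  ultimately have "S *v x0 = l *\<^sub>R x0"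
    by (auto dest!: pos_semidef_kernel simp: matrix_vector_mult_diff_rdistrib scaleR_matrix_vector_mult)
  moreover have "0 \<le> l" using psd x0 by (auto simp: pos_semidef_mat_iff)
  ultimately have "norm (S *v x0) = l" using x0 by simp
  moreover have "sigma_min S \<le> norm (S *v x0)"
    unfolding sigma_min_def by (rule cInf_lower) (use x0 in \<open>auto intro!: bdd_belowI[of _ 0]\<close>)
  ultimately have "sigma_min S * norm x ^ 2 \<le> l * norm x ^ 2" by (simp add: mult_right_mono)
  then show ?thesis using l by (meson order_trans)
qed

lemma spec_norm_nonneg: "0 \<le> spec_norm M"
  unfolding spec_norm_def by (rule onorm_pos_le[OF matrix_vector_mul_bounded_linear])

lemma inner_matrix_le_spec_norm: "\<bar>x \<bullet> (M *v y)\<bar> \<le> spec_norm (M::real^'n^'m) * norm x * norm y"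
proof -
  have "\<bar>x \<bullet> (M *v y)\<bar> \<le> norm x * norm (M *v y)" by (rule Cauchy_Schwarz_ineq2)
  also have "norm (M *v y) \<le> spec_norm M * norm y"
    unfolding spec_norm_def by (rule onorm[OF matrix_vector_mul_bounded_linear])
  then have "norm x * norm (M *v y) \<le> norm x * (spec_norm M * norm y)" by (simp add: mult_left_mono)
  finally show ?thesis by (simp add: mult_ac)
qed

lemma quad_form_le_spec_norm: "quad_form M x \<le> spec_norm M * norm x ^ 2"
  using inner_matrix_le_spec_norm[of x M x] by (simp add: quad_form_def power2_eq_square mult_ac)

lemma matrix_inv_invertible:
  "invertible (M::real^'n^'n) \<Longrightarrow> M ** matrix_inv M = mat 1 \<and> matrix_inv M ** M = mat 1"
  unfolding invertible_def matrix_inv_def by (rule someI_ex)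

lemma pos_def_mat_inverse:
  fixes M :: "real^'n^'n"
  assumes pd: "pos_def_mat M"
  shows "M ** matrix_inv M = mat 1" "matrix_inv M ** M = mat 1" "pos_def_mat (matrix_inv M)"
proof -
  have "M *v x = 0 \<Longrightarrow> x = 0" for x
    using pd by (auto simp: pos_def_mat_iff quad_form_def)
  then have "invertible M"
    using matrix_left_invertible_ker invertible_left_inverse by blast
  then show inv: "M ** matrix_inv M = mat 1" "matrix_inv M ** M = mat 1"
    using matrix_inv_invertible by auto
  define W where "W = matrix_inv M"
  have sym: "transpose M = M" using pd by (simp add: pos_def_mat_iff)
  have "transpose W = transpose W ** (M ** W)" using inv by (simp add: W_def)
  also have "\<dots> = transpose (M ** W) ** W" by (simp add: matrix_mul_assoc matrix_transpose_mul sym)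
  finally have "transpose W = W" using inv by (simp add: W_def)
  moreover have MW: "M *v (W *v y) = y" for y
    using inv by (simp add: W_def matrix_vector_mul_assoc)
  have "quad_form W y = quad_form M (W *v y)" for y
  proof -
    have "quad_form W y = (M *v (W *v y)) \<bullet> (W *v y)" by (simp add: quad_form_def MW)
    then show ?thesis by (simp add: quad_form_def inner_commute)
  qed
  moreover have "W *v y = 0 \<Longrightarrow> y = 0" for y
    using MW[of y] by simp
  ultimately show "pos_def_mat (matrix_inv M)"
    using pd by (auto simp: pos_def_mat_iff W_def)
qed

section \<open>Second moments of the closed loop\<close>

text \<open>The adjoint of \<open>T_op p G\<close> for the trace pairing below; in this notation the coupled
  Lyapunov equation defining \<open>P\<^sup>K\<close> reads \<open>P = Q + K\<^sup>T R K + lyap_op p \<Gamma> P\<close>.\<close>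

definition lyap_op ::
  "('s::finite \<Rightarrow> 's \<Rightarrow> real) \<Rightarrow> ('s \<Rightarrow> real^'n^'n) \<Rightarrow> ('s \<Rightarrow> real^'n^'n) \<Rightarrow> 's \<Rightarrow> real^'n^'n" where
  "lyap_op p G V i = transpose (G i) ** mode_expect p V i ** G i"

definition pairing :: "('s::finite \<Rightarrow> real^'n^'n) \<Rightarrow> ('s \<Rightarrow> real^'n^'n) \<Rightarrow> real" where
  "pairing V W = (\<Sum>i\<in>UNIV. trace (V i ** W i))"

lemma quad_form_lyap_op: "quad_form (lyap_op p G V i) x = (\<Sum>j\<in>UNIV. p i j * quad_form (V j) (G i *v x))"
  by (simp add: lyap_op_def quad_form_congruence mode_expect_def quad_form_sum quad_form_scaleR)

lemma inner_lyap_op: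
  "x \<bullet> (lyap_op p G W i *v y) = (\<Sum>j\<in>UNIV. p i j * ((G i *v x) \<bullet> (W j *v (G i *v y))))"
proof -
  have "x \<bullet> (lyap_op p G W i *v y) = (G i *v x) \<bullet> ((mode_expect p W i ** G i) *v y)"
    unfolding lyap_op_def matrix_mul_assoc[symmetric] by (rule inner_transpose_mult)
  then show ?thesis
    by (simp add: mode_expect_def matrix_vector_mul_assoc[symmetric] matrix_vector_mult_sum
        scaleR_matrix_vector_mult inner_sum_right)
qed

lemma lyap_op_diff: "lyap_op p G (\<lambda>j. V j - W j) = (\<lambda>i. lyap_op p G V i - lyap_op p G W i)"
  by (simp add: fun_eq_iff lyap_op_def mode_expect_def scaleR_diff_right sum_subtractf
      matrix_diff_ldistrib matrix_diff_rdistrib)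

lemma lyap_op_scaleR: "lyap_op p G (\<lambda>j. c *\<^sub>R V j) = (\<lambda>i. c *\<^sub>R lyap_op p G V i)"
proof -
  have "mode_expect p (\<lambda>j. c *\<^sub>R V j) i = c *\<^sub>R mode_expect p V i" for i
    by (simp add: mode_expect_def scaleR_sum_right mult.commute)
  then show ?thesis by (simp add: fun_eq_iff lyap_op_def matrix_scalar_ac scalar_matrix_assoc)
qed

lemma lyap_op_pow_scaleR: "(lyap_op p G ^^ t) (\<lambda>j. c *\<^sub>R V j) = (\<lambda>i. c *\<^sub>R (lyap_op p G ^^ t) V i)"
  by (induction t) (simp_all add: lyap_op_scaleR)

lemma pairing_diff_left: "pairing (\<lambda>i. V i - W i) M = pairing V M - pairing W M"
  by (simp add: pairing_def matrix_diff_rdistrib trace_sub sum_subtractf)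

lemma pairing_lyap_op: "pairing (lyap_op p G M) V = pairing M (T_op p G V)"
proof -
  have "trace (lyap_op p G M i ** V i) = (\<Sum>j\<in>UNIV. p i j * trace (M j ** (G i ** V i ** transpose (G i))))" for i
  proof -
    have "trace (lyap_op p G M i ** V i) = trace (transpose (G i) ** mode_expect p M i ** (G i ** V i))"
      by (simp add: lyap_op_def matrix_mul_assoc)
    also have "\<dots> = (\<Sum>j\<in>UNIV. p i j * trace (transpose (G i) ** M j ** (G i ** V i)))"
      unfolding mode_expect_def by (rule trace_mult_weighted_sum)
    also have "\<dots> = (\<Sum>j\<in>UNIV. p i j * trace (M j ** (G i ** V i ** transpose (G i))))"
      by (simp only: trace_mult_cycle)
    finally show ?thesis .
  qed
  then have "pairing (lyap_op p G M) V = (\<Sum>i\<in>UNIV. \<Sum>j\<in>UNIV. p i j * trace (M j ** (G i ** V i ** transpose (G i))))"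
    by (simp add: pairing_def)
  also have "\<dots> = (\<Sum>j\<in>UNIV. \<Sum>i\<in>UNIV. p i j * trace (M j ** (G i ** V i ** transpose (G i))))"
    by (rule sum.swap)
  also have "\<dots> = pairing M (T_op p G V)"
    by (simp add: pairing_def T_op_def matrix_sum_ldistrib trace_sum trace_mult_scaleR)
  finally show ?thesis .
qed

lemma pairing_lyap_op_pow: "pairing ((lyap_op p G ^^ t) M) V = pairing M ((T_op p G ^^ t) V)"
proof (induction t arbitrary: V)
  case (Suc t)
  have "pairing ((lyap_op p G ^^ Suc t) M) V = pairing ((lyap_op p G ^^ t) M) (T_op p G V)"
    by (simp add: pairing_lyap_op)
  also have "\<dots> = pairing M ((T_op p G ^^ Suc t) V)"
    by (simp add: Suc funpow_Suc_right del: funpow.simps)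
  finally show ?case .
qed simp

lemma sum_PiE_atMost_Suc:
  "(\<Sum>w\<in>PiE {..Suc t} (\<lambda>_. UNIV::'s::finite set). f w)
     = (\<Sum>g\<in>PiE {..t} (\<lambda>_. UNIV). \<Sum>y\<in>UNIV. f (g(Suc t := y)))"
proof -
  define H where "H = (\<lambda>(y::'s, g::nat \<Rightarrow> 's). g(Suc t := y))"
  have PE: "PiE {..Suc t} (\<lambda>_. UNIV::'s set) = H ` (UNIV \<times> PiE {..t} (\<lambda>_. UNIV))"
    unfolding H_def by (simp add: atMost_Suc PiE_insert_eq)
  have "inj_on H (UNIV \<times> PiE {..t} (\<lambda>_. UNIV::'s set))"
    unfolding H_def by (rule inj_combinator) simp
  then have "(\<Sum>w\<in>PiE {..Suc t} (\<lambda>_. UNIV). f w) = (\<Sum>(y, g)\<in>UNIV \<times> PiE {..t} (\<lambda>_. UNIV). f (g(Suc t := y)))"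
    unfolding PE by (simp add: sum.reindex H_def split_def)
  also have "\<dots> = (\<Sum>y\<in>UNIV. \<Sum>g\<in>PiE {..t} (\<lambda>_. UNIV). f (g(Suc t := y)))"
    by (simp add: sum.cartesian_product)
  finally show ?thesis by (simp add: sum.swap[where A = UNIV])
qed

lemma sum_PiE_atMost_0:
  "(\<Sum>w\<in>PiE {..0::nat} (\<lambda>_. UNIV::'s::finite set). f w) = (\<Sum>y\<in>UNIV. f ((\<lambda>_. undefined)(0 := y)))"
proof -
  have "{..0::nat} = insert 0 {}" by auto
  then have "PiE {..0::nat} (\<lambda>_. UNIV::'s set) = (\<lambda>(y, g). g(0 := y)) ` (UNIV \<times> PiE {} (\<lambda>_. UNIV))"
    by (simp only: PiE_insert_eq)
  also have "\<dots> = (\<lambda>y. (\<lambda>_. undefined)(0 := y)) ` UNIV" by auto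
  finally have PE: "PiE {..0::nat} (\<lambda>_. UNIV::'s set) = (\<lambda>y. (\<lambda>_. undefined)(0 := y)) ` UNIV" .
  have "inj (\<lambda>y::'s. (\<lambda>_::nat. undefined)(0 := y))"
    by (auto simp: inj_on_def fun_eq_iff)
  then show ?thesis unfolding PE by (simp add: sum.reindex)
qed

lemma trans_mat_cong: "(\<forall>s<t. w s = w' s) \<Longrightarrow> trans_mat G w t = trans_mat G w' t"
  by (induction t) auto

lemma pairing_X0: "pairing M (X0 q S) = (\<Sum>i\<in>UNIV. q i * trace (M i ** S))"
  by (simp add: pairing_def X0_def trace_mult_scaleR)

lemma quad_expect_0: "quad_expect q p S G M 0 = pairing M (X0 q S)"
  unfolding quad_expect_def sum_PiE_atMost_0
  by (simp add: path_prob_def pairing_X0)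

text \<open>Conditioning on the first \<open>t+1\<close> modes turns the last step into one application of
  \<open>lyap_op\<close> to the weight.\<close>

lemma quad_expect_Suc:
  fixes q :: "'s::finite \<Rightarrow> real"
  shows "quad_expect q p S G M (Suc t) = quad_expect q p S G (lyap_op p G M) t"
proof -
  have "(\<Sum>y\<in>UNIV. path_prob q p (g(Suc t := y)) (Suc t) *
          trace (transpose (trans_mat G (g(Suc t := y)) (Suc t)) ** M y ** trans_mat G (g(Suc t := y)) (Suc t) ** S))
      = path_prob q p g t * trace (transpose (trans_mat G g t) ** lyap_op p G M (g t) ** trans_mat G g t ** S)"
    (is "?lhs = _") if "g \<in> PiE {..t} (\<lambda>_. UNIV)" for g :: "nat \<Rightarrow> 's"
  proof -
    define \<Phi> where "\<Phi> = trans_mat G g t"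
    define H where "H = G (g t)"
    have prob: "path_prob q p (g(Suc t := y)) (Suc t) = path_prob q p g t * p (g t) y" for y
    proof -
      have "(\<Prod>s<t. p ((g(Suc t := y)) s) ((g(Suc t := y)) (Suc s))) = (\<Prod>s<t. p (g s) (g (Suc s)))"
        by (rule prod.cong) auto
      then show ?thesis by (simp add: path_prob_def)
    qed
    have "trans_mat G (g(Suc t := y)) t = \<Phi>" for y
      unfolding \<Phi>_def by (rule trans_mat_cong) auto
    then have mat: "trans_mat G (g(Suc t := y)) (Suc t) = H ** \<Phi>" for y
      by (simp add: H_def)
    have "transpose (H ** \<Phi>) ** M y ** (H ** \<Phi>) ** S
        = (transpose \<Phi> ** transpose H) ** M y ** (H ** (\<Phi> ** S))" for y
      by (simp add: matrix_transpose_mul matrix_mul_assoc)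
    then have "?lhs = (\<Sum>y\<in>UNIV. path_prob q p g t *
        (p (g t) y * trace ((transpose \<Phi> ** transpose H) ** M y ** (H ** (\<Phi> ** S)))))"
      by (simp add: prob mat mult.assoc del: trans_mat.simps)
    also have "\<dots> = path_prob q p g t *
        trace ((transpose \<Phi> ** transpose H) ** (\<Sum>y\<in>UNIV. p (g t) y *\<^sub>R M y) ** (H ** (\<Phi> ** S)))"
      by (simp add: trace_mult_weighted_sum sum_distrib_left)
    also have "\<dots> = path_prob q p g t * trace (transpose \<Phi> ** lyap_op p G M (g t) ** \<Phi> ** S)"
      by (simp add: lyap_op_def mode_expect_def matrix_mul_assoc H_def)
    finally show ?thesis by (simp only: \<Phi>_def)
  qed
  then show ?thesis
    unfolding quad_expect_def sum_PiE_atMost_Suc fun_upd_same by (rule sum.cong[OF refl])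
qed

lemma quad_expect_eq_pairing: "quad_expect q p S G M t = pairing ((lyap_op p G ^^ t) M) (X0 q S)"
  by (induction t arbitrary: M) (simp_all add: quad_expect_0 quad_expect_Suc funpow_Suc_right del: funpow.simps)

section \<open>Mean-square stability\<close>

text \<open>By \<open>quad_expect_eq_pairing\<close>, \<open>quad_form ((lyap_op p G ^^ t) (\<lambda>_. mat 1) i) x\<close> is the
  second moment of the state at time \<open>t\<close> when the chain starts in mode \<open>i\<close> and \<open>x\<^sub>0 = x\<close>.\<close>

definition exp_mean_square_stable :: "('s::finite \<Rightarrow> 's \<Rightarrow> real) \<Rightarrow> ('s \<Rightarrow> real^'n^'n) \<Rightarrow> bool" where
  "exp_mean_square_stable p G \<longleftrightarrow> (\<exists>C \<rho>. 0 \<le> C \<and> 0 \<le> \<rho> \<and> \<rho> < 1 \<and>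
     (\<forall>t i x. quad_form ((lyap_op p G ^^ t) (\<lambda>_. mat 1) i) x \<le> C * \<rho>^t * norm x ^ 2))"

definition cov_sum ::
  "('s::finite \<Rightarrow> 's \<Rightarrow> real) \<Rightarrow> ('s \<Rightarrow> real^'n^'n) \<Rightarrow> ('s \<Rightarrow> real^'n^'n) \<Rightarrow> 's \<Rightarrow> real^'n^'n" where
  "cov_sum p G V i = (\<Sum>t. (T_op p G ^^ t) V i)"

lemma bounded_linear_trace_mult: "bounded_linear (\<lambda>X::real^'n^'n. trace (M ** X))"
  unfolding linear_conv_bounded_linear[symmetric]
  by (rule linearI) (simp_all add: matrix_add_ldistrib trace_add trace_mult_scaleR)

lemma bounded_linear_quad_form: "bounded_linear (\<lambda>M. quad_form M x)"
  unfolding linear_conv_bounded_linear[symmetric]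
  by (rule linearI) (simp_all add: quad_form_add quad_form_scaleR)

lemma bounded_linear_transpose: "bounded_linear (\<lambda>M::real^'n^'m. transpose M)"
  unfolding linear_conv_bounded_linear[symmetric]
  by (rule linearI) (simp_all add: transpose_add transpose_scalar)

lemma bounded_linear_sandwich: "bounded_linear (\<lambda>X::real^'n^'n. (L::real^'n^'m) ** X ** (N::real^'k^'n))"
  unfolding linear_conv_bounded_linear[symmetric]
  by (rule linearI) (simp_all add: matrix_add_ldistrib matrix_add_rdistrib matrix_scalar_ac scalar_matrix_assoc)

lemma sums_pos_semidef:
  assumes psd: "\<And>t. pos_semidef_mat (f t)" and sums: "f sums S"
  shows "pos_semidef_mat S"
proof -
  have "(\<lambda>t. transpose (f t)) sums transpose S"
    by (rule bounded_linear.sums[OF bounded_linear_transpose sums])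
  moreover have "(\<lambda>t. transpose (f t)) = f"
    using psd by (simp add: pos_semidef_mat_iff)
  ultimately have "transpose S = S"
    using sums_unique2[OF _ sums] by metis
  moreover have "0 \<le> quad_form S x" for x
  proof -
    have "0 \<le> quad_form (f t) x" for t
      using psd[of t] unfolding pos_semidef_mat_iff by blast
    moreover have "(\<lambda>t. quad_form (f t) x) sums quad_form S x"
      by (rule bounded_linear.sums[OF bounded_linear_quad_form sums])
    ultimately show ?thesis by (rule sums_le[OF _ sums_zero])
  qed
  ultimately show ?thesis by (simp add: pos_semidef_mat_iff)
qed

lemma half_pow_div_le_root_pow:
  assumes "0 < N"
  shows "(1/2::real) ^ (t div N) \<le> 2 * root N (1/2) ^ t"
proof -
  define \<rho> where "\<rho> = root N (1/2::real)"
  have \<rho>: "0 \<le> \<rho>" "\<rho> < 1" "\<rho> ^ N = 1/2"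
    using assms by (simp_all add: \<rho>_def real_root_ge_zero real_root_lt_1_iff real_root_pow_pos2)
  have "\<rho> ^ N \<le> \<rho> ^ (t mod N)"
    using assms \<rho> by (intro power_decreasing) auto
  then have "(1/2) ^ (t div N) * (1/2) \<le> (1/2) ^ (t div N) * \<rho> ^ (t mod N)"
    using \<rho>(3) by (intro mult_left_mono) auto
  also have "\<dots> = \<rho> ^ t"
    using \<rho>(3) by (metis div_mult_mod_eq power_add power_mult mult.commute)
  finally show ?thesis unfolding \<rho>_def by simp
qed

lemma summable_of_entry_decay:
  fixes F :: "nat \<Rightarrow> real^'n^'m"
  assumes F: "\<And>t a b. \<bar>F t $ a $ b\<bar> \<le> K * \<rho>^t" and \<rho>: "0 \<le> \<rho>" "\<rho> < 1"
  shows "summable F"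
proof (rule summable_comparison_test)
  show "summable (\<lambda>t. (real CARD('m) * real CARD('n) * K) * \<rho>^t)"
    using \<rho> by (intro summable_mult summable_geometric) simp
  have "norm (F t) \<le> (real CARD('m) * real CARD('n) * K) * \<rho>^t" for t
  proof -
    have "norm (F t) \<le> (\<Sum>a\<in>UNIV. norm (F t $ a))"
      unfolding norm_vec_def by (rule L2_set_le_sum) simp
    also have "\<dots> \<le> (\<Sum>a\<in>UNIV. \<Sum>b\<in>UNIV. \<bar>F t $ a $ b\<bar>)"
      by (intro sum_mono norm_le_l1_cart)
    also have "\<dots> \<le> (\<Sum>a\<in>(UNIV::'m set). \<Sum>b\<in>(UNIV::'n set). K * \<rho>^t)"
      by (intro sum_mono F)
    finally show ?thesis by simp
  qed
  then show "\<exists>N. \<forall>t\<ge>N. norm (F t) \<le> (real CARD('m) * real CARD('n) * K) * \<rho>^t" by blast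
qed

lemma pairing_sums_right:
  "(\<And>i. (\<lambda>t. W t i) sums Z i) \<Longrightarrow> (\<lambda>t. pairing M (W t)) sums pairing M Z"
  unfolding pairing_def by (intro sums_sum bounded_linear.sums[OF bounded_linear_trace_mult])

lemma pairing_tendsto_right:
  "(\<And>i. (\<lambda>t. W t i) \<longlonglongrightarrow> Z i) \<Longrightarrow> (\<lambda>t. pairing M (W t)) \<longlonglongrightarrow> pairing M Z"
  unfolding pairing_def by (intro tendsto_sum bounded_linear.tendsto[OF bounded_linear_trace_mult])

lemma lyap_op_sums:
  assumes "\<And>j. (\<lambda>t. V t j) sums W j"
  shows "(\<lambda>t. lyap_op p G (V t) i) sums lyap_op p G W i"
proof -
  have "(\<lambda>t. mode_expect p (V t) i) sums mode_expect p W i"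
    unfolding mode_expect_def
    by (intro sums_sum bounded_linear.sums[OF bounded_linear_scaleR_right] assms)
  then show ?thesis
    unfolding lyap_op_def by (rule bounded_linear.sums[OF bounded_linear_sandwich])
qed

locale mode_chain =
  fixes p :: "'s::finite \<Rightarrow> 's \<Rightarrow> real"
  assumes stochastic: "stochastic_matrix p"
begin

lemma transition_nonneg: "0 \<le> p i j"
  using stochastic by (simp add: stochastic_matrix_def)

lemma mode_expect_pos_semidef: "(\<And>j. pos_semidef_mat (V j)) \<Longrightarrow> pos_semidef_mat (mode_expect p V i)"
  unfolding mode_expect_def by (intro pos_semidef_sum pos_semidef_scaleR transition_nonneg)

lemma lyap_op_pow_pos_semidef:
  "(\<And>j. pos_semidef_mat (V j)) \<Longrightarrow> pos_semidef_mat ((lyap_op p G ^^ t) V i)"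
  by (induction t arbitrary: i)
    (simp_all add: lyap_op_def pos_semidef_congruence mode_expect_pos_semidef)

lemma T_op_pos_semidef: "(\<And>i. pos_semidef_mat (V i)) \<Longrightarrow> pos_semidef_mat (T_op p G V j)"
  unfolding T_op_def
  by (intro pos_semidef_sum pos_semidef_scaleR transition_nonneg pos_semidef_congruence_transpose)

lemma T_op_pow_pos_semidef:
  "(\<And>i. pos_semidef_mat (V i)) \<Longrightarrow> pos_semidef_mat ((T_op p G ^^ t) V j)"
  by (induction t arbitrary: j) (auto intro: T_op_pos_semidef)

lemma lyap_op_pow_mono:
  assumes "\<And>j y. quad_form (V j) y \<le> quad_form (W j) y"
  shows "quad_form ((lyap_op p G ^^ t) V i) x \<le> quad_form ((lyap_op p G ^^ t) W i) x"
proof (induction t arbitrary: i x)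
  case (Suc t)
  then show ?case
    by (simp add: quad_form_lyap_op sum_mono mult_left_mono transition_nonneg)
qed (simp add: assms)

lemma lyap_op_pow_contraction:
  assumes "0 \<le> \<gamma>" and "\<And>i x. quad_form (lyap_op p G V i) x \<le> \<gamma> * quad_form (V i) x"
  shows "quad_form ((lyap_op p G ^^ t) V i) x \<le> \<gamma>^t * quad_form (V i) x"
proof (induction t arbitrary: i x)
  case (Suc t)
  have "quad_form ((lyap_op p G ^^ Suc t) V i) x = quad_form ((lyap_op p G ^^ t) (lyap_op p G V) i) x"
    by (simp add: funpow_Suc_right del: funpow.simps)
  also have "\<dots> \<le> quad_form ((lyap_op p G ^^ t) (\<lambda>j. \<gamma> *\<^sub>R V j) i) x"
    by (rule lyap_op_pow_mono) (simp add: quad_form_scaleR assms(2))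
  also have "\<dots> = \<gamma> * quad_form ((lyap_op p G ^^ t) V i) x"
    by (simp add: lyap_op_pow_scaleR quad_form_scaleR)
  also have "\<dots> \<le> \<gamma> ^ Suc t * quad_form (V i) x"
    using assms(1) Suc by (simp add: mult_left_mono mult.assoc)
  finally show ?case .
qed simp

lemma lyap_op_pow_block_decay:
  assumes "0 \<le> c" "0 \<le> C"
    and N: "\<And>j y. quad_form ((lyap_op p G ^^ N) (\<lambda>_. mat 1) j) y \<le> c * norm y ^ 2"
    and r: "\<And>j y. quad_form ((lyap_op p G ^^ r) (\<lambda>_. mat 1) j) y \<le> C * norm y ^ 2"
  shows "quad_form ((lyap_op p G ^^ (k * N + r)) (\<lambda>_. mat 1) i) x \<le> c^k * C * norm x ^ 2"
proof (induction k arbitrary: i x)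
  case (Suc k)
  define d where "d = c^k * C"
  have "quad_form ((lyap_op p G ^^ (Suc k * N + r)) (\<lambda>_. mat 1) i) x
      = quad_form ((lyap_op p G ^^ N) ((lyap_op p G ^^ (k * N + r)) (\<lambda>_. mat 1)) i) x"
    by (simp add: funpow_add add.assoc)
  also have "\<dots> \<le> quad_form ((lyap_op p G ^^ N) (\<lambda>_. d *\<^sub>R mat 1) i) x"
    by (rule lyap_op_pow_mono) (simp add: Suc d_def quad_form_scaleR quad_form_mat_1)
  also have "\<dots> = d * quad_form ((lyap_op p G ^^ N) (\<lambda>_. mat 1) i) x"
    by (simp add: lyap_op_pow_scaleR quad_form_scaleR)
  also have "\<dots> \<le> d * (c * norm x ^ 2)"
    using assms(1,2) by (intro mult_left_mono N) (simp add: d_def)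
  finally show ?case by (simp add: d_def mult_ac)
qed (simp add: r)

lemma lyap_op_pow_identity_trace_tendsto:
  assumes "mean_square_stable p G"
  shows "(\<lambda>t. trace ((lyap_op p G ^^ t) (\<lambda>_. mat 1 :: real^'n^'n) i)) \<longlonglongrightarrow> 0"
proof -
  define q where "q = (\<lambda>j. of_bool (j = i) :: real)"
  have "prob_vector q" by (simp add: prob_vector_def q_def)
  then have "(\<lambda>t. quad_expect q p (mat 1) G (\<lambda>_. mat 1 :: real^'n^'n) t) \<longlonglongrightarrow> 0"
    using assms pos_semidef_mat_1 unfolding mean_square_stable_def by blast
  moreover have "quad_expect q p (mat 1) G (\<lambda>_. mat 1) t = trace ((lyap_op p G ^^ t) (\<lambda>_. mat 1) i)" for t
    by (simp add: quad_expect_eq_pairing pairing_X0 q_def)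
  ultimately show ?thesis by simp
qed

lemma mean_square_stable_trace_halves:
  fixes G :: "'s \<Rightarrow> real^'n^'n"
  assumes "mean_square_stable p G"
  obtains N where "0 < N" "\<And>i. trace ((lyap_op p G ^^ N) (\<lambda>_. mat 1 :: real^'n^'n) i) < 1/2"
proof -
  define E where "E t = (lyap_op p G ^^ t) (\<lambda>_. mat 1 :: real^'n^'n)" for t
  have "\<forall>\<^sub>F t in sequentially. trace (E t i) < 1/2" for i
    using order_tendstoD(2)[OF lyap_op_pow_identity_trace_tendsto[OF assms], of "1/2"] by (simp add: E_def)
  then have "\<forall>\<^sub>F t in sequentially. \<forall>i. trace (E t i) < 1/2"
    by (simp add: eventually_all_finite)
  then obtain N where N: "\<And>i. trace (E N i) < 1/2" by (auto simp: eventually_sequentially)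
  have "N \<noteq> 0"
  proof
    assume "N = 0"
    then have "trace (E N undefined) = real CARD('n)" by (simp add: E_def trace_I)
    moreover have "1 \<le> real CARD('n)"
      using finite_UNIV_card_ge_0[where 'a='n] by simp
    ultimately show False
      using N[of undefined] by linarith
  qed
  then show ?thesis using that N by (simp add: E_def)
qed

lemma mean_square_stable_imp_exp:
  fixes G :: "'s \<Rightarrow> real^'n^'n"
  assumes "mean_square_stable p G"
  shows "exp_mean_square_stable p G"
proof -
  define E where "E t = (lyap_op p G ^^ t) (\<lambda>_. mat 1 :: real^'n^'n)" for t
  have E_psd: "pos_semidef_mat (E t i)" for t i
    unfolding E_def by (intro lyap_op_pow_pos_semidef pos_semidef_mat_1)
  obtain N where "0 < N" and N: "\<And>i. trace (E N i) < 1/2"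
    using mean_square_stable_trace_halves[OF assms] unfolding E_def by blast
  \<comment> \<open>blocks of \<open>N\<close> steps halve the second moment; the first \<open>N\<close> steps are bounded by \<open>C\<close>\<close>
  define C where "C = (\<Sum>r<N. \<Sum>i\<in>UNIV. trace (E r i))"
  have C: "0 \<le> C" unfolding C_def by (intro sum_nonneg pos_semidef_trace_nonneg E_psd)
  have EN: "quad_form (E N j) y \<le> 1/2 * norm y ^ 2" for j y
    using N[of j] by (intro quad_form_le_trace_bound E_psd) simp
  have Er: "quad_form (E (t mod N) j) y \<le> C * norm y ^ 2" for t j y
  proof -
    have "trace (E (t mod N) j) \<le> (\<Sum>i\<in>UNIV. trace (E (t mod N) i))"
      by (rule member_le_sum) (auto intro: pos_semidef_trace_nonneg E_psd)
    also have "\<dots> \<le> C"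
      unfolding C_def using \<open>0 < N\<close>
      by (intro member_le_sum) (auto intro!: sum_nonneg pos_semidef_trace_nonneg E_psd)
    finally show ?thesis by (intro quad_form_le_trace_bound E_psd)
  qed
  have "quad_form (E t i) x \<le> (2 * C) * root N (1/2) ^ t * norm x ^ 2" for t i x
  proof -
    have "quad_form (E (t div N * N + t mod N) i) x \<le> (1/2) ^ (t div N) * C * norm x ^ 2"
      unfolding E_def by (rule lyap_op_pow_block_decay) (use C EN Er in \<open>simp_all add: E_def\<close>)
    also have "\<dots> \<le> (2 * root N (1/2) ^ t) * C * norm x ^ 2"
      using half_pow_div_le_root_pow[of N t] \<open>0 < N\<close> C by (intro mult_right_mono) auto
    finally show ?thesis by (simp add: mult_ac)
  qed
  moreover have "0 \<le> root N (1/2::real)" "root N (1/2::real) < 1"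
    using \<open>0 < N\<close> by (simp_all add: real_root_ge_zero real_root_lt_1_iff)
  ultimately show ?thesis
    unfolding exp_mean_square_stable_def E_def using C by (intro exI[of _ "2 * C"] exI[of _ "root N (1/2)"]) auto
qed


lemma exp_imp_mean_square_stable:
  fixes G :: "'s \<Rightarrow> real^'n^'n"
  assumes "exp_mean_square_stable p G"
  shows "mean_square_stable p G"
  unfolding mean_square_stable_def
proof (intro allI impI)
  fix q :: "'s \<Rightarrow> real" and S :: "real^'n^'n"
  assume q: "prob_vector q" and S: "pos_semidef_mat S"
  obtain C \<rho> where C: "0 \<le> C" "0 \<le> \<rho>" "\<rho> < 1"
    and E: "\<And>t i x. quad_form ((lyap_op p G ^^ t) (\<lambda>_. mat 1) i) x \<le> C * \<rho>^t * norm x ^ 2"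
    using assms unfolding exp_mean_square_stable_def by blast
  have q0: "0 \<le> q i" for i using q by (simp add: prob_vector_def)
  define c where "c = C * trace S"
  have expect: "quad_expect q p S G (\<lambda>_. mat 1) t = (\<Sum>i\<in>UNIV. q i * trace ((lyap_op p G ^^ t) (\<lambda>_. mat 1) i ** S))" for t
    by (simp add: quad_expect_eq_pairing pairing_X0)
  have "pos_semidef_mat ((lyap_op p G ^^ t) (\<lambda>_. mat 1) i)" for t i
    by (intro lyap_op_pow_pos_semidef pos_semidef_mat_1)
  then have "0 \<le> quad_expect q p S G (\<lambda>_. mat 1) t" for t
    unfolding expect
    by (intro sum_nonneg mult_nonneg_nonneg q0 trace_mult_nonneg[OF S]) (simp add: pos_semidef_mat_iff)
  moreover have "quad_expect q p S G (\<lambda>_. mat 1) t \<le> c * \<rho>^t" for t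
  proof -
    have "quad_expect q p S G (\<lambda>_. mat 1) t \<le> (\<Sum>i\<in>UNIV. q i * (C * \<rho>^t * trace S))"
      unfolding expect by (intro sum_mono mult_left_mono q0 trace_mult_le[OF S] E)
    also have "\<dots> = (\<Sum>i\<in>UNIV. q i) * (C * \<rho>^t * trace S)"
      by (simp add: sum_distrib_right)
    also have "\<dots> = c * \<rho>^t"
      using q by (simp add: prob_vector_def c_def mult_ac)
    finally show ?thesis .
  qed
  ultimately have "\<forall>\<^sub>F t in sequentially. 0 \<le> quad_expect q p S G (\<lambda>_. mat 1) t"
    "\<forall>\<^sub>F t in sequentially. quad_expect q p S G (\<lambda>_. mat 1) t \<le> c * \<rho>^t"
    by (simp_all add: always_eventually)
  moreover have "(\<lambda>t. c * \<rho>^t) \<longlonglongrightarrow> 0"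
    by (rule tendsto_mult_right_zero[OF LIMSEQ_power_zero]) (use C in simp)
  ultimately show "(\<lambda>t. quad_expect q p S G (\<lambda>_. mat 1) t) \<longlonglongrightarrow> 0"
    by (rule tendsto_sandwich[OF _ _ tendsto_const])
qed

lemma lyap_ineq_contraction:
  assumes "0 < \<alpha>" and P: "\<And>i. pos_semidef_mat (P i)"
    and ineq: "\<And>i x. \<alpha> * norm x ^ 2 + quad_form (lyap_op p G P i) x \<le> quad_form (P i) x"
  obtains \<beta> \<gamma> where "0 < \<beta>" "0 \<le> \<gamma>" "\<gamma> < 1"
    "\<And>i x. \<alpha> * norm x ^ 2 \<le> quad_form (P i) x" "\<And>i x. quad_form (P i) x \<le> \<beta> * norm x ^ 2"
    "\<And>i x. quad_form (lyap_op p G P i) x \<le> \<gamma> * quad_form (P i) x"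
proof -
  define \<beta> where "\<beta> = (\<Sum>i\<in>UNIV. spec_norm (P i)) + \<alpha>"
  have P_le: "quad_form (P i) x \<le> \<beta> * norm x ^ 2" for i x
  proof -
    have "spec_norm (P i) \<le> (\<Sum>i\<in>UNIV. spec_norm (P i))"
      by (rule member_le_sum) (auto intro: spec_norm_nonneg)
    then have "spec_norm (P i) * norm x ^ 2 \<le> \<beta> * norm x ^ 2"
      using assms(1) by (intro mult_right_mono) (simp_all add: \<beta>_def)
    then show ?thesis using quad_form_le_spec_norm[of "P i" x] by linarith
  qed
  have P_ge: "\<alpha> * norm x ^ 2 \<le> quad_form (P i) x" for i x
  proof -
    have "0 \<le> quad_form (lyap_op p G P i) x"
      using lyap_op_pow_pos_semidef[OF P, where t=1] by (simp add: pos_semidef_mat_iff)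
    then show ?thesis using ineq[where i=i and x=x] by linarith
  qed
  have \<beta>: "\<alpha> \<le> \<beta>"
    using P_ge[where i=undefined and x="axis undefined 1"] P_le[where i=undefined and x="axis undefined 1"]
    by simp
  define \<gamma> where "\<gamma> = 1 - \<alpha> / \<beta>"
  have "quad_form (lyap_op p G P i) x \<le> \<gamma> * quad_form (P i) x" for i x
  proof -
    have "\<alpha> / \<beta> * quad_form (P i) x \<le> \<alpha> / \<beta> * (\<beta> * norm x ^ 2)"
      using P_le assms(1) \<beta> by (intro mult_left_mono) simp_all
    also have "\<dots> = \<alpha> * norm x ^ 2" using assms(1) \<beta> by simp
    finally have "\<alpha> / \<beta> * quad_form (P i) x \<le> \<alpha> * norm x ^ 2" .
    moreover have "\<gamma> * quad_form (P i) x = quad_form (P i) x - \<alpha> / \<beta> * quad_form (P i) x"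
      by (simp add: \<gamma>_def left_diff_distrib)
    ultimately show ?thesis using ineq[where i=i and x=x] by linarith
  qed
  moreover have "0 < \<beta>" "0 \<le> \<gamma>" "\<gamma> < 1" using assms(1) \<beta> by (simp_all add: \<gamma>_def)
  ultimately show thesis using that P_ge P_le by blast
qed

lemma lyap_ineq_imp_exp_mean_square_stable:
  assumes "0 < \<alpha>" and P: "\<And>i. pos_semidef_mat (P i)"
    and ineq: "\<And>i x. \<alpha> * norm x ^ 2 + quad_form (lyap_op p G P i) x \<le> quad_form (P i) x"
  shows "exp_mean_square_stable p G"
proof -
  obtain \<beta> \<gamma> where \<beta>: "0 < \<beta>" and \<gamma>: "0 \<le> \<gamma>" "\<gamma> < 1"
    and P_ge: "\<And>i x. \<alpha> * norm x ^ 2 \<le> quad_form (P i) x"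
    and P_le: "\<And>i x. quad_form (P i) x \<le> \<beta> * norm x ^ 2"
    and contr: "\<And>i x. quad_form (lyap_op p G P i) x \<le> \<gamma> * quad_form (P i) x"
    using lyap_ineq_contraction[OF assms] by blast
  have decay: "quad_form ((lyap_op p G ^^ t) P i) x \<le> \<gamma>^t * quad_form (P i) x" for t i x
    by (rule lyap_op_pow_contraction[OF \<gamma>(1) contr])
  have "quad_form ((lyap_op p G ^^ t) (\<lambda>_. mat 1) i) x \<le> \<beta> / \<alpha> * \<gamma>^t * norm x ^ 2" for t i x
  proof -
    have "quad_form ((lyap_op p G ^^ t) (\<lambda>_. mat 1) i) x \<le> quad_form ((lyap_op p G ^^ t) (\<lambda>j. (1/\<alpha>) *\<^sub>R P j) i) x"
    proof (rule lyap_op_pow_mono)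
      fix j y
      show "quad_form (mat 1) y \<le> quad_form ((1/\<alpha>) *\<^sub>R P j) y"
        using P_ge[where i=j and x=y] assms(1)
        by (simp add: quad_form_scaleR quad_form_mat_1 pos_le_divide_eq mult.commute)
    qed
    also have "\<dots> = (1/\<alpha>) * quad_form ((lyap_op p G ^^ t) P i) x"
      by (simp add: lyap_op_pow_scaleR quad_form_scaleR)
    also have "\<dots> \<le> (1/\<alpha>) * (\<gamma>^t * (\<beta> * norm x ^ 2))"
    proof -
      have "quad_form ((lyap_op p G ^^ t) P i) x \<le> \<gamma>^t * (\<beta> * norm x ^ 2)"
        using decay[where t=t and i=i and x=x] mult_left_mono[OF P_le zero_le_power[OF \<gamma>(1)]]
        by (meson order_trans)
      then show ?thesis using assms(1) by (intro mult_left_mono) simp_all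
    qed
    also have "\<dots> = \<beta> / \<alpha> * \<gamma>^t * norm x ^ 2" by simp
    finally show ?thesis .
  qed
  then show ?thesis
    unfolding exp_mean_square_stable_def using assms(1) \<beta> \<gamma>
    by (intro exI[of _ "\<beta> / \<alpha>"] exI[of _ \<gamma>]) auto
qed

lemma lyap_op_pow_bilinear_bound:
  assumes "0 \<le> c" and D: "\<And>j x y. \<bar>x \<bullet> (D j *v y)\<bar> \<le> c * norm x * norm y"
  shows "\<bar>x \<bullet> ((lyap_op p G ^^ t) D i *v y)\<bar>
    \<le> c / 2 * (quad_form ((lyap_op p G ^^ t) (\<lambda>_. mat 1) i) x + quad_form ((lyap_op p G ^^ t) (\<lambda>_. mat 1) i) y)"
proof (induction t arbitrary: i x y)
  case 0
  have "norm x * norm y \<le> (norm x ^ 2 + norm y ^ 2) / 2"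
    using sum_squares_bound[of "norm x" "norm y"] by (simp add: power2_eq_square)
  then have "c * norm x * norm y \<le> c / 2 * (norm x ^ 2 + norm y ^ 2)"
    using assms(1) mult_left_mono by fastforce
  then show ?case using D[where j=i and x=x and y=y] by (simp add: quad_form_mat_1)
next
  case (Suc t)
  define W where "W = (lyap_op p G ^^ t) D"
  define E where "E = (lyap_op p G ^^ t) (\<lambda>_. mat 1)"
  have "\<bar>x \<bullet> ((lyap_op p G ^^ Suc t) D i *v y)\<bar> = \<bar>\<Sum>j\<in>UNIV. p i j * ((G i *v x) \<bullet> (W j *v (G i *v y)))\<bar>"
    by (simp add: W_def inner_lyap_op)
  also have "\<dots> \<le> (\<Sum>j\<in>UNIV. p i j * \<bar>(G i *v x) \<bullet> (W j *v (G i *v y))\<bar>)"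
    using transition_nonneg by (auto intro: order_trans[OF sum_abs] simp: abs_mult)
  also have "\<dots> \<le> (\<Sum>j\<in>UNIV. p i j * (c / 2 * (quad_form (E j) (G i *v x) + quad_form (E j) (G i *v y))))"
    using Suc.IH unfolding W_def E_def by (intro sum_mono mult_left_mono transition_nonneg)
  also have "\<dots> = c / 2 * (quad_form (lyap_op p G E i) x + quad_form (lyap_op p G E i) y)"
    by (simp add: quad_form_lyap_op sum_distrib_left sum.distrib algebra_simps)
  finally show ?case by (simp add: E_def)
qed

lemma lyap_op_pow_entry_decay:
  assumes "0 \<le> C"
    and E: "\<And>t i x. quad_form ((lyap_op p G ^^ t) (\<lambda>_. mat 1) i) x \<le> C * \<rho>^t * norm x ^ 2"
  shows "\<exists>K. \<forall>t i a b. \<bar>(lyap_op p G ^^ t) D i $ a $ b\<bar> \<le> K * \<rho>^t"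
proof -
  define c where "c = (\<Sum>j\<in>UNIV. spec_norm (D j))"
  have c: "0 \<le> c" unfolding c_def by (intro sum_nonneg spec_norm_nonneg)
  have "\<bar>x \<bullet> (D j *v y)\<bar> \<le> c * norm x * norm y" for j x y
  proof -
    have "spec_norm (D j) \<le> c"
      unfolding c_def by (rule member_le_sum) (auto intro: spec_norm_nonneg)
    then have "spec_norm (D j) * norm x * norm y \<le> c * norm x * norm y"
      by (intro mult_right_mono) simp_all
    then show ?thesis using inner_matrix_le_spec_norm[of x "D j" y] by linarith
  qed
  note bound = lyap_op_pow_bilinear_bound[OF c this]
  have "\<bar>(lyap_op p G ^^ t) D i $ a $ b\<bar> \<le> (c * C) * \<rho>^t" for t i a b
  proof -
    have "\<bar>(lyap_op p G ^^ t) D i $ a $ b\<bar>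
        \<le> c / 2 * (quad_form ((lyap_op p G ^^ t) (\<lambda>_. mat 1) i) (axis a 1)
          + quad_form ((lyap_op p G ^^ t) (\<lambda>_. mat 1) i) (axis b 1))"
      using bound[where x="axis a 1" and y="axis b 1" and t=t and i=i] by (simp add: inner_axis_matrix)
    also have "\<dots> \<le> c / 2 * (C * \<rho>^t + C * \<rho>^t)"
      using c E[where t=t and i=i and x="axis a 1"] E[where t=t and i=i and x="axis b 1"]
      by (intro mult_left_mono add_mono) auto
    finally show ?thesis by simp
  qed
  then show ?thesis by blast
qed

lemma T_op_pow_entry_decay:
  assumes "0 \<le> C" "0 \<le> \<rho>"
    and E: "\<And>t i x. quad_form ((lyap_op p G ^^ t) (\<lambda>_. mat 1 :: real^'n^'n) i) x \<le> C * \<rho>^t * norm x ^ 2"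
  shows "\<exists>K. \<forall>t a b. \<bar>(T_op p G ^^ t) V j $ a $ b\<bar> \<le> K * \<rho>^t"
proof -
  \<comment> \<open>entries of \<open>T_op\<close> are pairings with matrix units, moved over to \<open>lyap_op\<close> by duality\<close>
  define U :: "'n \<times> 'n \<Rightarrow> 's \<Rightarrow> real^'n^'n"
    where "U ab l = (if l = j then (\<chi> k m. if k = snd ab \<and> m = fst ab then 1 else 0) else 0)" for ab l
  have "\<forall>ab. \<exists>K. \<forall>t l k m. \<bar>(lyap_op p G ^^ t) (U ab) l $ k $ m\<bar> \<le> K * \<rho>^t"
    using lyap_op_pow_entry_decay[OF assms(1) E] by blast
  then obtain K where K: "\<And>ab t l k m. \<bar>(lyap_op p G ^^ t) (U ab) l $ k $ m\<bar> \<le> K ab * \<rho>^t"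
    by metis
  define cV where "cV = (\<Sum>l\<in>UNIV. \<Sum>k\<in>UNIV. \<Sum>m\<in>UNIV. \<bar>V l $ m $ k\<bar>)"
  define Kmax where "Kmax = (\<Sum>ab\<in>UNIV. \<bar>K ab\<bar>)"
  have "\<bar>(T_op p G ^^ t) V j $ a $ b\<bar> \<le> (Kmax * cV) * \<rho>^t" for t a b
  proof -
    have "trace (U (a, b) l ** (T_op p G ^^ t) V l) = (if l = j then (T_op p G ^^ t) V j $ a $ b else 0)" for l
      by (cases "l = j") (simp_all add: U_def trace_mult_unit)
    then have "(T_op p G ^^ t) V j $ a $ b = pairing (U (a, b)) ((T_op p G ^^ t) V)"
      by (simp add: pairing_def)
    also have "\<dots> = pairing ((lyap_op p G ^^ t) (U (a, b))) V"
      by (rule pairing_lyap_op_pow[symmetric])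
    also have "\<bar>\<dots>\<bar> \<le> (\<Sum>l\<in>UNIV. \<Sum>k\<in>UNIV. \<Sum>m\<in>UNIV. (\<bar>K (a, b)\<bar> * \<rho>^t) * \<bar>V l $ m $ k\<bar>)"
      unfolding pairing_def
      by (intro order_trans[OF sum_abs] sum_mono order_trans[OF abs_trace_mult_le] mult_right_mono
          order_trans[OF K] mult_right_mono) (use assms in auto)
    also have "\<dots> = (\<bar>K (a, b)\<bar> * \<rho>^t) * cV"
      by (simp add: cV_def sum_distrib_left)
    also have "\<dots> \<le> (Kmax * \<rho>^t) * cV"
      unfolding Kmax_def using assms(2)
      by (intro mult_right_mono member_le_sum) (auto simp: cV_def intro!: sum_nonneg)
    finally show ?thesis by (simp add: mult_ac)
  qed
  then show ?thesis by blast
qed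

lemma exp_mean_square_stable_summable:
  assumes "exp_mean_square_stable p G"
  shows "summable (\<lambda>t. (lyap_op p G ^^ t) D i)" "summable (\<lambda>t. (T_op p G ^^ t) V i)"
proof -
  obtain C \<rho> where C: "0 \<le> C" "0 \<le> \<rho>" "\<rho> < 1"
    and E: "\<And>t i x. quad_form ((lyap_op p G ^^ t) (\<lambda>_. mat 1) i) x \<le> C * \<rho>^t * norm x ^ 2"
    using assms unfolding exp_mean_square_stable_def by blast
  obtain K where "\<And>t i a b. \<bar>(lyap_op p G ^^ t) D i $ a $ b\<bar> \<le> K * \<rho>^t"
    using lyap_op_pow_entry_decay[OF C(1) E] by blast
  then show "summable (\<lambda>t. (lyap_op p G ^^ t) D i)"
    using C by (intro summable_of_entry_decay) auto
  obtain K' where "\<And>t a b. \<bar>(T_op p G ^^ t) V i $ a $ b\<bar> \<le> K' * \<rho>^t"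
    using T_op_pow_entry_decay[OF C(1,2) E] by blast
  then show "summable (\<lambda>t. (T_op p G ^^ t) V i)"
    using C by (intro summable_of_entry_decay) auto
qed

lemma lyap_series_solves_lyap_equation:
  assumes sums: "\<And>j. (\<lambda>t. (lyap_op p G ^^ t) W j) sums P j"
  shows "P i = W i + lyap_op p G P i"
proof -
  have "(\<lambda>t. lyap_op p G ((lyap_op p G ^^ t) W) i) sums lyap_op p G P i"
    by (rule lyap_op_sums[OF sums])
  then have "(\<lambda>t. (lyap_op p G ^^ Suc t) W i) sums lyap_op p G P i"
    by simp
  then have "(\<lambda>t. (lyap_op p G ^^ t) W i) sums (lyap_op p G P i + W i)"
    by (subst (asm) sums_Suc_iff) simp
  then show ?thesis using sums_unique2[OF sums[of i]] by (simp add: add.commute)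
qed

lemma lyap_equation_unique:
  assumes "exp_mean_square_stable p G"
    and P: "\<And>i. P i = W i + lyap_op p G P i" and P': "\<And>i. P' i = W i + lyap_op p G P' i"
  shows "P' = P"
proof -
  define D where "D = (\<lambda>i. P' i - P i)"
  have "lyap_op p G D i = D i" for i
  proof -
    have "lyap_op p G P i = P i - W i" "lyap_op p G P' i = P' i - W i"
      using P[of i] P'[of i] by (simp_all add: algebra_simps)
    then show ?thesis by (simp add: D_def lyap_op_diff)
  qed
  then have "lyap_op p G D = D" by (simp add: fun_eq_iff)
  then have "(lyap_op p G ^^ t) D = D" for t by (induction t) simp_all
  moreover have "(\<lambda>t. (lyap_op p G ^^ t) D i) \<longlonglongrightarrow> 0" for i
    by (intro summable_LIMSEQ_zero exp_mean_square_stable_summable(1)[OF assms(1)])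
  ultimately have "D i = 0" for i by (simp add: LIMSEQ_const_iff)
  then show ?thesis by (simp add: D_def fun_eq_iff)
qed

lemma cov_sum_sums:
  "exp_mean_square_stable p G \<Longrightarrow> (\<lambda>t. (T_op p G ^^ t) V i) sums cov_sum p G V i"
  unfolding cov_sum_def by (intro summable_sums exp_mean_square_stable_summable(2))

lemma cov_sum_ge:
  assumes "exp_mean_square_stable p G" and V: "\<And>i. pos_semidef_mat (V i)"
  shows "pos_semidef_mat (cov_sum p G V i)" "quad_form (V i) x \<le> quad_form (cov_sum p G V i) x"
proof -
  note sums = cov_sum_sums[OF assms(1), of V i]
  have terms_psd: "pos_semidef_mat ((T_op p G ^^ t) V i)" for t
    by (rule T_op_pow_pos_semidef[OF V])
  then show "pos_semidef_mat (cov_sum p G V i)"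
    by (rule sums_pos_semidef[OF _ sums])
  have "(\<lambda>t. quad_form ((T_op p G ^^ t) V i) x) sums quad_form (cov_sum p G V i) x"
    by (rule bounded_linear.sums[OF bounded_linear_quad_form sums])
  then have tail: "(\<lambda>t. quad_form ((T_op p G ^^ Suc t) V i) x)
      sums (quad_form (cov_sum p G V i) x - quad_form (V i) x)"
    by (subst sums_Suc_iff) simp
  have "0 \<le> quad_form ((T_op p G ^^ Suc t) V i) x" for t
    using terms_psd[of "Suc t"] unfolding pos_semidef_mat_iff by blast
  then have "0 \<le> quad_form (cov_sum p G V i) x - quad_form (V i) x"
    by (rule sums_le[OF _ sums_zero tail])
  then show "quad_form (V i) x \<le> quad_form (cov_sum p G V i) x" by simp
qed

text \<open>The pairing of a solution of \<open>D = E + lyap_op p G D\<close> with \<open>V\<close> telescopes along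
  \<open>T_op p G ^^ t\<close>.\<close>

lemma pairing_lyap_fixpoint:
  assumes "exp_mean_square_stable p G" and DE: "\<And>i. D i = E i + lyap_op p G D i"
  shows "pairing D V = pairing E (cov_sum p G V)"
proof -
  define f where "f t = pairing D ((T_op p G ^^ t) V)" for t
  have "f \<longlonglongrightarrow> pairing D (\<lambda>i. 0)"
    unfolding f_def
    by (intro pairing_tendsto_right summable_LIMSEQ_zero exp_mean_square_stable_summable(2)[OF assms(1)])
  then have "f \<longlonglongrightarrow> 0" by (simp add: pairing_def)
  then have "(\<lambda>t. f t - f (Suc t)) sums (f 0 - 0)"
    by (rule telescope_sums')
  moreover have "f t - f (Suc t) = pairing E ((T_op p G ^^ t) V)" for t
  proof -
    have "f t - f (Suc t) = pairing (\<lambda>i. D i - lyap_op p G D i) ((T_op p G ^^ t) V)"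
      by (simp add: f_def pairing_lyap_op[symmetric] pairing_diff_left)
    also have "(\<lambda>i. D i - lyap_op p G D i) = E"
      using DE by (simp add: fun_eq_iff algebra_simps)
    finally show ?thesis .
  qed
  ultimately have "(\<lambda>t. pairing E ((T_op p G ^^ t) V)) sums pairing D V"
    by (simp add: f_def)
  moreover have "(\<lambda>t. pairing E ((T_op p G ^^ t) V)) sums pairing E (cov_sum p G V)"
    by (intro pairing_sums_right cov_sum_sums[OF assms(1)])
  ultimately show ?thesis by (rule sums_unique2)
qed

end

section \<open>The Gauss--Newton step\<close>

lemma riccati_difference:
  fixes A :: "real^'n^'n" and B :: "real^'m^'n" and K K' :: "real^'n^'m" and R :: "real^'m^'m"
    and E :: "real^'n^'n"
  assumes "transpose R = R" "transpose E = E"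
  defines "M \<equiv> R + transpose B ** E ** B"
  defines "L \<equiv> M ** K - transpose B ** E ** A"
  shows "transpose K' ** R ** K' + transpose (A - B ** K') ** E ** (A - B ** K')
      - (transpose K ** R ** K + transpose (A - B ** K) ** E ** (A - B ** K))
    = transpose (K' - K) ** L + transpose L ** (K' - K) + transpose (K' - K) ** M ** (K' - K)"
  unfolding M_def L_def
  by (simp add: matrix_add_ldistrib matrix_add_rdistrib matrix_diff_ldistrib matrix_diff_rdistrib
      transpose_add transpose_diff matrix_transpose_mul matrix_mul_assoc assms algebra_simps)

lemma gn_step_difference:
  fixes M W :: "real^'m^'m" and L :: "real^'n^'m" and \<eta> :: real
  assumes W: "transpose W = W" and WM: "W ** M = mat 1"
  defines "D \<equiv> - ((2 * \<eta>) *\<^sub>R (W ** L))"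
  shows "transpose D ** L + transpose L ** D + transpose D ** M ** D
    = (4 * \<eta>\<^sup>2 - 4 * \<eta>) *\<^sub>R (transpose L ** W ** L)"
proof -
  define N where "N = transpose L ** W ** L"
  have tWL: "transpose (W ** L) = transpose L ** W" by (simp add: matrix_transpose_mul W)
  have "transpose D ** L = (- (2 * \<eta>)) *\<^sub>R N"
    by (simp add: D_def N_def transpose_neg matrix_neg_left transpose_scalar tWL scalar_matrix_assoc[symmetric])
  moreover have "transpose L ** D = (- (2 * \<eta>)) *\<^sub>R N"
    by (simp add: D_def N_def matrix_neg_right matrix_scalar_ac scalar_matrix_assoc[symmetric] matrix_mul_assoc)
  moreover have "transpose D ** M ** D = (4 * \<eta>\<^sup>2) *\<^sub>R N"
  proof -
    have "transpose D ** M ** D = ((2 * \<eta>) * (2 * \<eta>)) *\<^sub>R (transpose L ** (W ** M) ** W ** L)"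
      by (simp add: D_def transpose_neg matrix_neg_left matrix_neg_right transpose_scalar tWL
          matrix_scalar_ac scalar_matrix_assoc[symmetric] matrix_mul_assoc)
    then show ?thesis by (simp add: WM N_def power2_eq_square)
  qed
  moreover have "(- (2 * \<eta>)) *\<^sub>R N + (- (2 * \<eta>)) *\<^sub>R N + (4 * \<eta>\<^sup>2) *\<^sub>R N = (4 * \<eta>\<^sup>2 - 4 * \<eta>) *\<^sub>R N"
  proof -
    have "- (2 * \<eta>) + - (2 * \<eta>) + 4 * \<eta>\<^sup>2 = 4 * \<eta>\<^sup>2 - 4 * \<eta>" by simp
    then show ?thesis by (simp only: scaleR_left_distrib[symmetric])
  qed
  ultimately show ?thesis by (simp only: N_def)
qed

lemma completed_square_nonneg:
  fixes M W :: "real^'m^'m" and L D :: "real^'n^'m"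
  assumes M: "pos_semidef_mat M" and MW: "M ** W = mat 1"
  shows "0 \<le> quad_form (transpose D ** L + transpose L ** D + transpose D ** M ** D + transpose L ** W ** L) x"
proof -
  define u where "u = D *v x"
  define v where "v = W *v (L *v x)"
  have Mv: "M *v v = L *v x" by (simp add: v_def matrix_vector_mul_assoc matrix_mul_assoc MW)
  have sym: "v \<bullet> (M *v u) = u \<bullet> (M *v v)"
    using M inner_symmetric_matrix by (auto simp: pos_semidef_mat_iff)
  have "quad_form (transpose D ** L) x = u \<bullet> (L *v x)" "quad_form (transpose L ** D) x = u \<bullet> (L *v x)"
    by (simp_all add: quad_form_def inner_transpose_mult u_def inner_commute)
  then have "quad_form (transpose D ** L + transpose L ** D + transpose D ** M ** D + transpose L ** W ** L) x
      = quad_form M u + 2 * (u \<bullet> (L *v x)) + quad_form W (L *v x)"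
    by (simp add: quad_form_add quad_form_congruence u_def)
  also have "\<dots> = quad_form M (u + v)"
  proof -
    have "v \<bullet> (M *v u) = u \<bullet> (L *v x)" using sym Mv by simp
    moreover have "quad_form M v = quad_form W (L *v x)"
      unfolding quad_form_def Mv by (simp add: v_def inner_commute)
    ultimately show ?thesis by (simp add: quad_form_add_vector Mv)
  qed
  also have "\<dots> \<ge> 0" using M by (simp add: pos_semidef_mat_iff)
  finally show ?thesis .
qed

lemma mu_const_nonneg: "(\<And>i. 0 \<le> q i) \<Longrightarrow> 0 \<le> mu_const q S"
  unfolding mu_const_def by (simp add: sigma_min_nonneg)

lemma mu_const_le_quad_form_X0:
  assumes "\<And>i. 0 \<le> q i" and "pos_semidef_mat S"
  shows "mu_const q S * norm x ^ 2 \<le> quad_form (X0 q S i) x"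
proof -
  have "Min (range q) * (sigma_min S * norm x ^ 2) \<le> q i * (sigma_min S * norm x ^ 2)"
    by (intro mult_right_mono) (simp_all add: sigma_min_nonneg)
  also have "\<dots> \<le> q i * quad_form S x"
    using assms by (intro mult_left_mono sigma_min_le_quad_form) auto
  finally show ?thesis by (simp add: mu_const_def X0_def quad_form_scaleR mult.assoc)
qed

lemma contraction_rate:
  fixes \<mu> m \<eta> d :: real
  assumes \<mu>: "0 \<le> \<mu>" "\<mu> \<le> m" and \<eta>: "0 < \<eta>" "\<eta> \<le> 1/2" and d: "0 \<le> d"
    and descent: "c' - c \<le> - 2 * \<eta> * \<mu> * d" and gap: "c - c\<^sub>0 \<le> m * d"
  shows "0 \<le> 1 - 2 * \<mu> / m * \<eta>" "c' - c\<^sub>0 \<le> (1 - 2 * \<mu> / m * \<eta>) * (c - c\<^sub>0)"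
proof -
  show "0 \<le> 1 - 2 * \<mu> / m * \<eta>"
  proof (cases "m = 0")
    case False
    then have "2 * \<mu> * \<eta> \<le> m" using \<mu> \<eta> mult_left_mono[of \<eta> "1/2" \<mu>] by simp
    then show ?thesis using \<mu> False by (simp add: field_simps)
  qed simp
  show "c' - c\<^sub>0 \<le> (1 - 2 * \<mu> / m * \<eta>) * (c - c\<^sub>0)"
  proof (cases "m = 0")
    case True
    moreover have "0 \<le> 2 * \<eta> * \<mu> * d" using \<eta> \<mu> d by simp
    ultimately show ?thesis using descent by simp
  next
    case False
    \<comment> \<open>the gap bound turns the guaranteed decrease \<open>2 \<eta> \<mu> d\<close> into a fixed fraction of the gap\<close>
    then have "(c - c\<^sub>0) / m \<le> d" using gap \<mu> by (simp add: divide_le_eq mult.commute)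
    then have "2 * \<eta> * \<mu> * ((c - c\<^sub>0) / m) \<le> 2 * \<eta> * \<mu> * d"
      using \<eta> \<mu> by (intro mult_left_mono) auto
    then have "c' - c\<^sub>0 \<le> (c - c\<^sub>0) - 2 * \<eta> * \<mu> * ((c - c\<^sub>0) / m)"
      using descent by linarith
    also have "\<dots> = (1 - 2 * \<mu> / m * \<eta>) * (c - c\<^sub>0)"
      by (simp add: algebra_simps)
    finally show ?thesis .
  qed
qed

locale mjls_lqr = mode_chain p for p :: "'s::finite \<Rightarrow> 's \<Rightarrow> real" +
  fixes A :: "'s \<Rightarrow> real^'n::finite^'n" and B :: "'s \<Rightarrow> real^'m::finite^'n"
    and Q :: "'s \<Rightarrow> real^'n^'n" and R :: "'s \<Rightarrow> real^'m^'m"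
  assumes Q_pd: "\<And>i. pos_def_mat (Q i)" and R_pd: "\<And>i. pos_def_mat (R i)"
begin

definition cost_weight :: "('s \<Rightarrow> real^'n^'m) \<Rightarrow> 's \<Rightarrow> real^'n^'n" where
  "cost_weight K i = Q i + transpose (K i) ** R i ** K i"

definition gn_hessian :: "('s \<Rightarrow> real^'n^'m) \<Rightarrow> 's \<Rightarrow> real^'m^'m" where
  "gn_hessian K i = R i + transpose (B i) ** mode_expect p (P_mat p A B Q R K) i ** B i"

definition newton_decrement :: "('s \<Rightarrow> real^'n^'m) \<Rightarrow> 's \<Rightarrow> real^'n^'n" where
  "newton_decrement K i = transpose (L_mat p A B Q R K i) ** matrix_inv (gn_hessian K i) ** L_mat p A B Q R K i"

lemma cost_weight_pos_semidef: "pos_semidef_mat (cost_weight K i)"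
  unfolding cost_weight_def
  by (intro pos_semidef_add pos_def_imp_pos_semidef Q_pd pos_semidef_congruence R_pd)

lemma stabilizing_exp_mean_square_stable:
  "K \<in> stabilizing p A B \<Longrightarrow> exp_mean_square_stable p (closed_loop A B K)"
  by (simp add: stabilizing_def mean_square_stable_imp_exp)

lemma P_mat_sums:
  assumes K: "K \<in> stabilizing p A B"
  shows "(\<lambda>t. (lyap_op p (closed_loop A B K) ^^ t) (cost_weight K) i) sums P_mat p A B Q R K i"
proof -
  define G where "G = closed_loop A B K"
  define P where "P i = (\<Sum>t. (lyap_op p G ^^ t) (cost_weight K) i)" for i
  note exp = stabilizing_exp_mean_square_stable[OF K, folded G_def]
  have sums: "(\<lambda>t. (lyap_op p G ^^ t) (cost_weight K) i) sums P i" for i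
    unfolding P_def by (intro summable_sums exp_mean_square_stable_summable(1)[OF exp])
  note fixpoint = lyap_series_solves_lyap_equation[OF sums]
  have lyap_iff: "(\<forall>i. P' i = cost_weight K i + lyap_op p G P' i) \<longleftrightarrow> (\<forall>i. P' i = Q i + transpose (K i) ** R i ** K i
      + transpose (closed_loop A B K i) ** mode_expect p P' i ** closed_loop A B K i)" for P'
    by (simp add: cost_weight_def lyap_op_def G_def)
  have "P_mat p A B Q R K = P"
    unfolding P_mat_def
  proof (rule the_equality)
    have "\<forall>i. P i = cost_weight K i + lyap_op p G P i" using fixpoint by blast
    then show "\<forall>i. P i = Q i + transpose (K i) ** R i ** K i
        + transpose (closed_loop A B K i) ** mode_expect p P i ** closed_loop A B K i"
      by (rule lyap_iff[THEN iffD1])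
    show "P' = P" if "\<forall>i. P' i = Q i + transpose (K i) ** R i ** K i
        + transpose (closed_loop A B K i) ** mode_expect p P' i ** closed_loop A B K i" for P'
      using lyap_iff[THEN iffD2, OF that] by (intro lyap_equation_unique[OF exp fixpoint]) blast
  qed
  then show ?thesis using sums by (simp add: G_def)
qed

lemma P_mat_lyap_equation:
  assumes "K \<in> stabilizing p A B"
  shows "P_mat p A B Q R K i = cost_weight K i + lyap_op p (closed_loop A B K) (P_mat p A B Q R K) i"
  by (rule lyap_series_solves_lyap_equation[OF P_mat_sums[OF assms]])

lemma P_mat_pos_semidef:
  assumes "K \<in> stabilizing p A B"
  shows "pos_semidef_mat (P_mat p A B Q R K i)"
  by (rule sums_pos_semidef[OF _ P_mat_sums[OF assms]])
    (intro lyap_op_pow_pos_semidef cost_weight_pos_semidef)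

lemma lqr_cost_eq_pairing_cov:
  assumes "K \<in> stabilizing p A B"
  shows "lqr_cost q p S A B Q R K = pairing (cost_weight K) (cov_sum p (closed_loop A B K) (X0 q S))"
proof -
  have "(\<lambda>t. quad_expect q p S (closed_loop A B K) (cost_weight K) t)
      sums pairing (cost_weight K) (cov_sum p (closed_loop A B K) (X0 q S))"
    unfolding quad_expect_eq_pairing pairing_lyap_op_pow
    by (intro pairing_sums_right cov_sum_sums stabilizing_exp_mean_square_stable assms)
  then show ?thesis by (simp add: lqr_cost_def cost_weight_def[abs_def] sums_iff)
qed

lemma lqr_cost_eq_pairing_P:
  assumes "K \<in> stabilizing p A B"
  shows "lqr_cost q p S A B Q R K = pairing (P_mat p A B Q R K) (X0 q S)"
  using pairing_lyap_fixpoint[OF stabilizing_exp_mean_square_stable P_mat_lyap_equation, OF assms assms]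
  by (simp add: lqr_cost_eq_pairing_cov[OF assms])

lemma lqr_cost_difference:
  assumes K: "K \<in> stabilizing p A B" and K': "K' \<in> stabilizing p A B"
  shows "lqr_cost q p S A B Q R K' - lqr_cost q p S A B Q R K
    = pairing (\<lambda>i. cost_weight K' i + lyap_op p (closed_loop A B K') (P_mat p A B Q R K) i - P_mat p A B Q R K i)
        (cov_sum p (closed_loop A B K') (X0 q S))"
proof -
  define P where "P = P_mat p A B Q R K"
  define P' where "P' = P_mat p A B Q R K'"
  define G' where "G' = closed_loop A B K'"
  have "pairing (\<lambda>i. P' i - P i) (X0 q S)
      = pairing (\<lambda>i. cost_weight K' i + lyap_op p G' P i - P i) (cov_sum p G' (X0 q S))"
  proof (rule pairing_lyap_fixpoint)
    show "exp_mean_square_stable p G'"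
      unfolding G'_def by (rule stabilizing_exp_mean_square_stable[OF K'])
    fix i
    have "P' i = cost_weight K' i + lyap_op p G' P' i"
      unfolding P'_def G'_def by (rule P_mat_lyap_equation[OF K'])
    then show "P' i - P i = (cost_weight K' i + lyap_op p G' P i - P i) + lyap_op p G' (\<lambda>i. P' i - P i) i"
      by (simp add: lyap_op_diff)
  qed
  then show ?thesis
    using lqr_cost_eq_pairing_P[OF K] lqr_cost_eq_pairing_P[OF K']
    by (simp add: pairing_diff_left P_def P'_def G'_def)
qed

lemma gn_hessian_pos_def: "K \<in> stabilizing p A B \<Longrightarrow> pos_def_mat (gn_hessian K i)"
  unfolding gn_hessian_def
  by (intro pos_def_add_pos_semidef R_pd pos_semidef_congruence mode_expect_pos_semidef P_mat_pos_semidef)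

lemma newton_decrement_pos_semidef: "K \<in> stabilizing p A B \<Longrightarrow> pos_semidef_mat (newton_decrement K i)"
  unfolding newton_decrement_def
  by (intro pos_semidef_congruence pos_def_imp_pos_semidef pos_def_mat_inverse(3) gn_hessian_pos_def)

lemma P_mat_increment:
  assumes "K \<in> stabilizing p A B"
  shows "cost_weight K' i + lyap_op p (closed_loop A B K') (P_mat p A B Q R K) i - P_mat p A B Q R K i
    = transpose (K' i - K i) ** L_mat p A B Q R K i + transpose (L_mat p A B Q R K i) ** (K' i - K i)
      + transpose (K' i - K i) ** gn_hessian K i ** (K' i - K i)"
proof -
  define E where "E = mode_expect p (P_mat p A B Q R K) i"
  have R_sym: "transpose (R i) = R i" using R_pd by (simp add: pos_def_mat_iff)
  have E_sym: "transpose E = E"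
    using mode_expect_pos_semidef[OF P_mat_pos_semidef[OF assms]] by (simp add: E_def pos_semidef_mat_iff)
  have "P_mat p A B Q R K i = Q i + transpose (K i) ** R i ** K i + transpose (A i - B i ** K i) ** E ** (A i - B i ** K i)"
    using P_mat_lyap_equation[OF assms, of i] by (simp add: E_def cost_weight_def lyap_op_def closed_loop_def)
  then have "cost_weight K' i + lyap_op p (closed_loop A B K') (P_mat p A B Q R K) i - P_mat p A B Q R K i
      = transpose (K' i) ** R i ** K' i + transpose (A i - B i ** K' i) ** E ** (A i - B i ** K' i)
        - (transpose (K i) ** R i ** K i + transpose (A i - B i ** K i) ** E ** (A i - B i ** K i))"
    by (simp add: E_def cost_weight_def lyap_op_def closed_loop_def)
  also have "\<dots> = transpose (K' i - K i) ** L_mat p A B Q R K i + transpose (L_mat p A B Q R K i) ** (K' i - K i)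
      + transpose (K' i - K i) ** gn_hessian K i ** (K' i - K i)"
    unfolding L_mat_def gn_hessian_def E_def[symmetric] by (rule riccati_difference[OF R_sym E_sym])
  finally show ?thesis .
qed

lemma gn_step_increment:
  fixes \<eta> :: real
  assumes "K \<in> stabilizing p A B"
  defines "K' \<equiv> gn_step p A B Q R \<eta> K"
  shows "cost_weight K' i + lyap_op p (closed_loop A B K') (P_mat p A B Q R K) i - P_mat p A B Q R K i
    = (4 * \<eta>\<^sup>2 - 4 * \<eta>) *\<^sub>R newton_decrement K i"
proof -
  define W where "W = matrix_inv (gn_hessian K i)"
  note inv = pos_def_mat_inverse[OF gn_hessian_pos_def[OF assms(1)], of i, folded W_def]
  have "K' i - K i = - ((2 * \<eta>) *\<^sub>R (W ** L_mat p A B Q R K i))"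
    by (simp add: K'_def gn_step_def W_def gn_hessian_def)
  then show ?thesis
    using gn_step_difference[of W "gn_hessian K i" \<eta> "L_mat p A B Q R K i"] inv
    by (simp add: P_mat_increment[OF assms(1)] newton_decrement_def W_def pos_def_mat_iff)
qed

lemma Q_uniformly_pos_def: "\<exists>\<alpha>>0. \<forall>i x. \<alpha> * norm x ^ 2 \<le> quad_form (Q i) x"
proof -
  have "\<forall>i. \<exists>l>0. \<forall>x. l * norm x ^ 2 \<le> quad_form (Q i) x"
    using Q_pd pos_def_mat_coercive by blast
  then obtain l where l: "\<And>i. l i > 0" "\<And>i x. l i * norm x ^ 2 \<le> quad_form (Q i) x" by metis
  have "Min (range l) * norm x ^ 2 \<le> quad_form (Q i) x" for i x
    using mult_right_mono[of "Min (range l)" "l i" "norm x ^ 2"] l(2)[of i x] by simp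
  moreover have "Min (range l) > 0" using l(1) by simp
  ultimately show ?thesis by blast
qed

text \<open>\<open>P\<^sup>K\<close> is a Lyapunov function for the closed loop of the new gain.\<close>

lemma gn_step_stabilizing:
  assumes K: "K \<in> stabilizing p A B" and "0 \<le> \<eta>" "\<eta> \<le> 1"
  shows "gn_step p A B Q R \<eta> K \<in> stabilizing p A B"
proof -
  define K' where "K' = gn_step p A B Q R \<eta> K"
  define P where "P = P_mat p A B Q R K"
  obtain \<alpha> where \<alpha>: "\<alpha> > 0" "\<And>i x. \<alpha> * norm x ^ 2 \<le> quad_form (Q i) x"
    using Q_uniformly_pos_def by blast
  have c: "4 * \<eta>\<^sup>2 - 4 * \<eta> \<le> 0"
    using mult_left_mono[of \<eta> 1 \<eta>] assms(2,3) by (simp add: power2_eq_square)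
  have "\<alpha> * norm x ^ 2 + quad_form (lyap_op p (closed_loop A B K') P i) x \<le> quad_form (P i) x" for i x
  proof -
    have "P i = cost_weight K' i + lyap_op p (closed_loop A B K') P i - (4 * \<eta>\<^sup>2 - 4 * \<eta>) *\<^sub>R newton_decrement K i"
      using gn_step_increment[OF K, where \<eta>=\<eta> and i=i, folded K'_def P_def] by (simp add: algebra_simps)
    then have "quad_form (P i) x = quad_form (cost_weight K' i + lyap_op p (closed_loop A B K') P i
        - (4 * \<eta>\<^sup>2 - 4 * \<eta>) *\<^sub>R newton_decrement K i) x"
      by (rule arg_cong)
    also have "\<dots> = quad_form (Q i) x + quad_form (R i) (K' i *v x)
        + quad_form (lyap_op p (closed_loop A B K') P i) x
        - (4 * \<eta>\<^sup>2 - 4 * \<eta>) * quad_form (newton_decrement K i) x"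
      by (simp add: cost_weight_def quad_form_add quad_form_diff quad_form_scaleR quad_form_congruence)
    finally have "quad_form (P i) x = \<dots>" .
    moreover have "0 \<le> quad_form (R i) (K' i *v x)"
      using pos_def_imp_pos_semidef[OF R_pd[of i]] by (simp add: pos_semidef_mat_iff)
    moreover have "(4 * \<eta>\<^sup>2 - 4 * \<eta>) * quad_form (newton_decrement K i) x \<le> 0"
      using newton_decrement_pos_semidef[OF K] c
      by (intro mult_nonpos_nonneg) (simp_all add: pos_semidef_mat_iff)
    ultimately show ?thesis
      using \<alpha>(2)[where i=i and x=x] by linarith
  qed
  then have "exp_mean_square_stable p (closed_loop A B K')"
    by (rule lyap_ineq_imp_exp_mean_square_stable[OF \<alpha>(1) P_mat_pos_semidef[OF K, folded P_def]])
  then show ?thesis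
    by (simp add: K'_def stabilizing_def exp_imp_mean_square_stable)
qed

lemma X_bold_eq_cov_sum: "X_bold q p S A B K = cov_sum p (closed_loop A B K) (X0 q S)"
  by (simp add: fun_eq_iff X_bold_def cov_sum_def)

lemma cov_sum_X0_bounds:
  assumes "K \<in> stabilizing p A B" and q: "\<And>i. 0 \<le> q i" and S: "pos_semidef_mat S"
  shows "pos_semidef_mat (cov_sum p (closed_loop A B K) (X0 q S) i)"
    "mu_const q S * norm x ^ 2 \<le> quad_form (cov_sum p (closed_loop A B K) (X0 q S) i) x"
proof -
  have X0: "pos_semidef_mat (X0 q S j)" for j
    unfolding X0_def using q S by (rule pos_semidef_scaleR)
  note cov = cov_sum_ge[OF stabilizing_exp_mean_square_stable[OF assms(1)] X0]
  show "pos_semidef_mat (cov_sum p (closed_loop A B K) (X0 q S) i)" by (rule cov(1))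
  have "mu_const q S * norm x ^ 2 \<le> quad_form (X0 q S i) x"
    by (rule mu_const_le_quad_form_X0[OF q S])
  also have "\<dots> \<le> quad_form (cov_sum p (closed_loop A B K) (X0 q S) i) x"
    by (rule cov(2))
  finally show "mu_const q S * norm x ^ 2 \<le> quad_form (cov_sum p (closed_loop A B K) (X0 q S) i) x" .
qed

lemma mu_const_le_max_norm:
  assumes "K \<in> stabilizing p A B" and q: "\<And>i. 0 \<le> q i" and S: "pos_semidef_mat S"
  shows "mu_const q S \<le> max_norm (X_bold q p S A B K)"
proof -
  define X where "X = cov_sum p (closed_loop A B K) (X0 q S) undefined"
  define e :: "real^'n" where "e = axis undefined 1"
  have "mu_const q S = mu_const q S * norm e ^ 2" by (simp add: e_def)
  also have "\<dots> \<le> quad_form X e" unfolding X_def by (rule cov_sum_X0_bounds(2)[OF assms])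
  also have "\<dots> \<le> spec_norm X" using quad_form_le_spec_norm[of X e] by (simp add: e_def)
  also have "\<dots> \<le> max_norm (X_bold q p S A B K)"
    by (simp add: max_norm_def X_def X_bold_eq_cov_sum)
  finally show ?thesis .
qed

lemma gn_step_cost_descent:
  assumes K: "K \<in> stabilizing p A B" and \<eta>: "0 < \<eta>" "\<eta> \<le> 1/2"
    and q: "\<And>i. 0 \<le> q i" and S: "pos_semidef_mat S"
  shows "lqr_cost q p S A B Q R (gn_step p A B Q R \<eta> K) - lqr_cost q p S A B Q R K
    \<le> - 2 * \<eta> * mu_const q S * (\<Sum>i\<in>UNIV. trace (newton_decrement K i))"
proof -
  define K' where "K' = gn_step p A B Q R \<eta> K"
  define X where "X = cov_sum p (closed_loop A B K') (X0 q S)"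
  define c where "c = 4 * \<eta>\<^sup>2 - 4 * \<eta>"
  define \<mu> where "\<mu> = mu_const q S"
  define N where "N = newton_decrement K"
  have K': "K' \<in> stabilizing p A B"
    unfolding K'_def using K \<eta> by (intro gn_step_stabilizing) auto
  have "lqr_cost q p S A B Q R K' - lqr_cost q p S A B Q R K = pairing (\<lambda>i. c *\<^sub>R N i) X"
    using lqr_cost_difference[OF K K'] gn_step_increment[OF K, where \<eta>=\<eta>, folded K'_def]
    by (simp add: X_def c_def N_def)
  also have "\<dots> = c * (\<Sum>i\<in>UNIV. trace (N i ** X i))"
    by (simp add: pairing_def scalar_matrix_assoc[symmetric] trace_scaleR sum_distrib_left)
  also have "\<dots> \<le> c * (\<mu> * (\<Sum>i\<in>UNIV. trace (N i)))"
  proof (rule mult_left_mono_neg)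
    have "\<mu> * trace (N i) \<le> trace (N i ** X i)" for i
    proof -
      have "\<mu> * trace (N i) \<le> trace (X i ** N i)"
        unfolding N_def X_def \<mu>_def
        by (rule trace_mult_ge[OF newton_decrement_pos_semidef[OF K]]) (rule cov_sum_X0_bounds(2)[OF K' q S])
      then show ?thesis using trace_mul_sym[of "X i" "N i"] by linarith
    qed
    then show "\<mu> * (\<Sum>i\<in>UNIV. trace (N i)) \<le> (\<Sum>i\<in>UNIV. trace (N i ** X i))"
      by (simp add: sum_distrib_left sum_mono)
    show "c \<le> 0" using \<eta> by (simp add: c_def power2_eq_square)
  qed
  also have "\<dots> \<le> - 2 * \<eta> * (\<mu> * (\<Sum>i\<in>UNIV. trace (N i)))"
  proof (rule mult_right_mono)
    show "c \<le> - 2 * \<eta>"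
      using mult_left_mono[of \<eta> "1/2" \<eta>] \<eta> by (simp add: c_def power2_eq_square)
    have "0 \<le> \<mu>" unfolding \<mu>_def by (rule mu_const_nonneg[OF q])
    moreover have "0 \<le> (\<Sum>i\<in>UNIV. trace (N i))"
      unfolding N_def by (intro sum_nonneg pos_semidef_trace_nonneg newton_decrement_pos_semidef[OF K])
    ultimately show "0 \<le> \<mu> * (\<Sum>i\<in>UNIV. trace (N i))" by simp
  qed
  finally show ?thesis by (simp add: K'_def \<mu>_def N_def mult.assoc)
qed

lemma cost_gap_le_newton_decrement:
  assumes K: "K \<in> stabilizing p A B" and K': "K' \<in> stabilizing p A B"
    and q: "\<And>i. 0 \<le> q i" and S: "pos_semidef_mat S"
  shows "lqr_cost q p S A B Q R K - lqr_cost q p S A B Q R K'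
    \<le> max_norm (X_bold q p S A B K') * (\<Sum>i\<in>UNIV. trace (newton_decrement K i))"
proof -
  define X where "X = cov_sum p (closed_loop A B K') (X0 q S)"
  define m where "m = max_norm (X_bold q p S A B K')"
  define N where "N = newton_decrement K"
  define Inc where "Inc i = cost_weight K' i + lyap_op p (closed_loop A B K') (P_mat p A B Q R K) i
    - P_mat p A B Q R K i" for i
  have X: "pos_semidef_mat (X i)" for i
    unfolding X_def by (rule cov_sum_X0_bounds(1)[OF K' q S])
  have N: "pos_semidef_mat (N i)" for i
    unfolding N_def by (rule newton_decrement_pos_semidef[OF K])
  have "- (m * trace (N i)) \<le> trace (Inc i ** X i)" for i
  proof -
    note inv = pos_def_mat_inverse[OF gn_hessian_pos_def[OF K], of i]
    have "0 \<le> quad_form (Inc i + N i) y" for y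
      unfolding Inc_def P_mat_increment[OF K] N_def newton_decrement_def
      by (rule completed_square_nonneg[OF pos_def_imp_pos_semidef[OF gn_hessian_pos_def[OF K]] inv(1)])
    then have "0 \<le> trace ((Inc i + N i) ** X i)" by (rule trace_mult_nonneg[OF X])
    moreover have "trace (N i ** X i) \<le> m * trace (N i)"
    proof -
      have "trace (N i ** X i) = trace (X i ** N i)" by (rule trace_mul_sym)
      also have "\<dots> \<le> spec_norm (X i) * trace (N i)"
        by (rule trace_mult_le[OF N quad_form_le_spec_norm])
      also have "\<dots> \<le> m * trace (N i)"
        using pos_semidef_trace_nonneg[OF N]
        by (intro mult_right_mono) (simp_all add: m_def max_norm_def X_def X_bold_eq_cov_sum)
      finally show ?thesis .
    qed
    ultimately show ?thesis by (simp add: matrix_add_rdistrib trace_add)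
  qed
  then have "- (m * (\<Sum>i\<in>UNIV. trace (N i))) \<le> pairing Inc X"
    unfolding pairing_def by (simp add: sum_distrib_left sum_negf[symmetric] sum_mono)
  moreover have "lqr_cost q p S A B Q R K' - lqr_cost q p S A B Q R K = pairing Inc X"
    unfolding lqr_cost_difference[OF K K'] Inc_def X_def ..
  ultimately show ?thesis by (simp add: m_def N_def)
qed

lemma gn_step_contraction:
  assumes K: "K \<in> stabilizing p A B" and Kopt: "Kopt \<in> stabilizing p A B"
    and \<eta>: "0 < \<eta>" "\<eta> \<le> 1/2" and q: "\<And>i. 0 \<le> q i" and S: "pos_semidef_mat S"
  defines "\<rho> \<equiv> 1 - 2 * mu_const q S / max_norm (X_bold q p S A B Kopt) * \<eta>"
  shows "0 \<le> \<rho>"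
    and "lqr_cost q p S A B Q R (gn_step p A B Q R \<eta> K) - lqr_cost q p S A B Q R Kopt
      \<le> \<rho> * (lqr_cost q p S A B Q R K - lqr_cost q p S A B Q R Kopt)"
proof -
  have \<mu>: "0 \<le> mu_const q S" by (rule mu_const_nonneg[OF q])
  have m: "mu_const q S \<le> max_norm (X_bold q p S A B Kopt)"
    by (rule mu_const_le_max_norm[OF Kopt q S])
  have d: "0 \<le> (\<Sum>i\<in>UNIV. trace (newton_decrement K i))"
    by (intro sum_nonneg pos_semidef_trace_nonneg newton_decrement_pos_semidef[OF K])
  have descent: "lqr_cost q p S A B Q R (gn_step p A B Q R \<eta> K) - lqr_cost q p S A B Q R K
      \<le> - 2 * \<eta> * mu_const q S * (\<Sum>i\<in>UNIV. trace (newton_decrement K i))"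
    by (rule gn_step_cost_descent[OF K \<eta> q S])
  have gap: "lqr_cost q p S A B Q R K - lqr_cost q p S A B Q R Kopt
      \<le> max_norm (X_bold q p S A B Kopt) * (\<Sum>i\<in>UNIV. trace (newton_decrement K i))"
    by (rule cost_gap_le_newton_decrement[OF K Kopt q S])
  note rate = contraction_rate[OF \<mu> m \<eta> d descent gap]
  show "0 \<le> \<rho>" unfolding \<rho>_def by (rule rate(1))
  show "lqr_cost q p S A B Q R (gn_step p A B Q R \<eta> K) - lqr_cost q p S A B Q R Kopt
      \<le> \<rho> * (lqr_cost q p S A B Q R K - lqr_cost q p S A B Q R Kopt)"
    unfolding \<rho>_def by (rule rate(2))
qed

lemma gn_iterates_contraction:
  assumes K0: "K0 \<in> stabilizing p A B" and Kopt: "Kopt \<in> stabilizing p A B"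
    and \<eta>: "0 < \<eta>" "\<eta> \<le> 1/2" and q: "\<And>i. 0 \<le> q i" and S: "pos_semidef_mat S"
  defines "\<rho> \<equiv> 1 - 2 * mu_const q S / max_norm (X_bold q p S A B Kopt) * \<eta>"
  shows "(gn_step p A B Q R \<eta> ^^ n) K0 \<in> stabilizing p A B \<and>
    lqr_cost q p S A B Q R ((gn_step p A B Q R \<eta> ^^ n) K0) - lqr_cost q p S A B Q R Kopt
      \<le> \<rho> ^ n * (lqr_cost q p S A B Q R K0 - lqr_cost q p S A B Q R Kopt)"
proof (induction n)
  case (Suc n)
  define K where "K = (gn_step p A B Q R \<eta> ^^ n) K0"
  define C where "C K = lqr_cost q p S A B Q R K - lqr_cost q p S A B Q R Kopt" for K
  have K: "K \<in> stabilizing p A B" and IH: "C K \<le> \<rho> ^ n * C K0"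
    using Suc by (simp_all add: K_def C_def)
  have "C (gn_step p A B Q R \<eta> K) \<le> \<rho> * C K"
    unfolding C_def \<rho>_def by (rule gn_step_contraction(2)[OF K Kopt \<eta> q S])
  also have "\<dots> \<le> \<rho> * (\<rho> ^ n * C K0)"
  proof (rule mult_left_mono[OF IH])
    show "0 \<le> \<rho>" unfolding \<rho>_def by (rule gn_step_contraction(1)[OF K Kopt \<eta> q S])
  qed
  finally have "C (gn_step p A B Q R \<eta> K) \<le> \<rho> ^ Suc n * C K0" by (simp add: mult.assoc)
  moreover have "gn_step p A B Q R \<eta> K \<in> stabilizing p A B"
    using K \<eta> by (intro gn_step_stabilizing) auto
  ultimately show ?case by (simp add: K_def C_def)
qed (simp add: K0)

end

theorem theorem2:
  fixes A :: "'s::finite \<Rightarrow> real^'n::finite^'n"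
    and B :: "'s \<Rightarrow> real^'m::finite^'n"
    and Q :: "'s \<Rightarrow> real^'n^'n"
    and R :: "'s \<Rightarrow> real^'m^'m"
    and p :: "'s \<Rightarrow> 's \<Rightarrow> real"
    and \<pi> :: "'s \<Rightarrow> real"
    and S0 :: "real^'n^'n"
    and Kopt K0 :: "'s \<Rightarrow> real^'n^'m"
    and \<eta> :: real
  assumes p_stoch: "stochastic_matrix p"
    and pi_dist: "prob_vector \<pi>" and pi_pos: "\<forall>i. \<pi> i > 0"
    and S0_pd: "pos_def_mat S0"
    and Q_pd: "\<forall>i. pos_def_mat (Q i)" and R_pd: "\<forall>i. pos_def_mat (R i)"
    and stabilizable: "stabilizing p A B \<noteq> {}"
    and Kopt_in: "Kopt \<in> stabilizing p A B"
    and Kopt_opt: "\<forall>K \<in> stabilizing p A B. lqr_cost \<pi> p S0 A B Q R Kopt \<le> lqr_cost \<pi> p S0 A B Q R K"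
    and K0_in: "K0 \<in> stabilizing p A B"
    and eta_pos: "0 < \<eta>" and eta_le: "\<eta> \<le> 1/2"
  shows "\<forall>n. (gn_step p A B Q R \<eta> ^^ n) K0 \<in> stabilizing p A B \<and>
           lqr_cost \<pi> p S0 A B Q R ((gn_step p A B Q R \<eta> ^^ n) K0) - lqr_cost \<pi> p S0 A B Q R Kopt
           \<le> (1 - 2 * mu_const \<pi> S0 / max_norm (X_bold \<pi> p S0 A B Kopt) * \<eta>) ^ n
             * (lqr_cost \<pi> p S0 A B Q R K0 - lqr_cost \<pi> p S0 A B Q R Kopt)"
proof -
  interpret mjls_lqr p A B Q R
    using p_stoch Q_pd R_pd by unfold_locales auto
  have "\<And>i. 0 \<le> \<pi> i" using pi_pos by (simp add: less_imp_le)
  \<comment> \<open>only \<open>Kopt \<in> stabilizing p A B\<close> is used: the contraction holds relative to any stabilizing gain\<close>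
  then show ?thesis
    using gn_iterates_contraction[OF K0_in Kopt_in eta_pos eta_le _ pos_def_imp_pos_semidef[OF S0_pd]]
    by blast
qed

end
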